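(* Let $k$ be a field, $\Gamma$ a $k$-algebra, $M$ a $\Gamma$-module and $n\geq 1$, with a complex $\mathrm{P}$, maps $\alpha,\beta$, the complex $\mathcal{P}$, the DG-algebra $\mathcal{E}=\mathcal{E}nd_\Gamma(\mathcal{P})$, the element $\sigma$, and the graded spaces ${}^{\sigma}\mathcal{E}$, ${}^{-\sigma}\mathcal{E}$ as in the context. Let $\mathcal{T}$ be the graded vector space whose degree $j$ part consists of pairs $(x,y)$ with $x\in{}^{\sigma}\mathcal{E}^{j}$ and $y\in{}^{-\sigma}\mathcal{E}^{j-n+1}$ (so $\mathcal{T}={}^{\sigma}\mathcal{E}\oplus{}^{-\sigma}\mathcal{E}[1-n]$), with multiplication defined on homogeneous elements by \[(x,y)\cdot(a,b)=\big(x\circ a,\; x\circ b+(-1)^{|a|(|\sigma|+1)}\,y\circ a\big)\] and differential \[\xi(x,y)=\big(\delta(x)-(-1)^{|x|}\,y\circ\sigma,\;\delta(y)\big),\] both extended linearly (here $|x|,|y|,|a|$ are the degrees as elements of $\mathcal{E}$, and $|\sigma|=n$). Then $(\mathcal{T},\cdot,\xi)$ is a DG-algebra (the trivial extension DG-algebra).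
   Context: Modules are right modules. $\Gamma$ is a $k$-algebra, $M$ a $\Gamma$-module, $n\ge 1$. We are given a complex of finitely generated projective $\Gamma$-modules $\mathrm{P}=(0\to P_{n-1}\xrightarrow{d_{n-1}}\cdots\xrightarrow{d_1}P_0\to 0)$, with $P_i$ in cohomological degree $-i$, and maps $\alpha\colon P_0\to M$, $\beta\colon M\to P_{n-1}$ such that $0\to M\xrightarrow{\beta}P_{n-1}\to\cdots\to P_0\xrightarrow{\alpha}M\to 0$ is exact. Put $d_0=\beta\circ\alpha\colon P_0\to P_{n-1}$. Let $\mathcal{P}$ be the complex (a projective resolution of $M$) whose component in degree $-(\ell n+i)$, for $\ell\ge 0$ and $0\le i\le n-1$, is a copy of $P_i$ ("the $\ell$-th copy"), with differential $(-1)^{\ell n}d_i$ from the $\ell$-th copy of $P_i$ to the $\ell$-th copy of $P_{i-1}$ for $i\ge1$, and $(-1)^{\ell n}d_0$ from the $(\ell+1)$-th copy of $P_0$ to the $\ell$-th copy of $P_{n-1}$; all other components are zero. (Thus $\mathcal{P}=\cdots\to\mathrm{P}[2n]\xrightarrow{d_0[n]}\mathrm{P}[n]\xrightarrow{d_0}\mathrm{P}\to0$, where $[1]$ shifts left and negates the differential.) $\mathcal{E}=\mathcal{E}nd_\Gamma(\mathcal{P})$ is the DG endomorphism algebra: $\mathcal{E}^i$ consists of collections of $\Gamma$-maps $\mathcal{P}^j\to\mathcal{P}^{j+i}$ (no compatibility required), multiplication is composition $\circ$, and the differential is $\delta(f)=d_{\mathcal{P}}\circ f-(-1)^{|f|}f\circ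 d_{\mathcal{P}}$. $\sigma\in\mathcal{E}^n$ is the map which is the identity from the $\ell$-th copy of $P_i$ to the $(\ell-1)$-th copy of $P_i$ for all $\ell\ge1$, and zero on the $0$-th copy. Define ${}^{\sigma}\mathcal{E}^i=\{x\in\mathcal{E}^i:\sigma\circ x=(-1)^{|\sigma||x|}x\circ\sigma\}$ and ${}^{-\sigma}\mathcal{E}^i=\{y\in\mathcal{E}^i:\sigma\circ y=(-1)^{|\sigma|(|y|+1)}y\circ\sigma\}$, with ${}^{\pm\sigma}\mathcal{E}=\bigoplus_i{}^{\pm\sigma}\mathcal{E}^i$. *)

theory Defs
  imports Main
begin

record ('m,'g) rmod =
  mcar :: "'m set"
  madd :: "'m \<Rightarrow> 'm \<Rightarrow> 'm"
  mzero :: "'m"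
  mneg :: "'m \<Rightarrow> 'm"
  mact :: "'m \<Rightarrow> 'g \<Rightarrow> 'm"

definition right_module :: "('m,'g::ring_1) rmod \<Rightarrow> bool" where
  "right_module M \<longleftrightarrow>
     mzero M \<in> mcar M \<and>
     (\<forall>x\<in>mcar M. \<forall>y\<in>mcar M. madd M x y \<in> mcar M) \<and>
     (\<forall>x\<in>mcar M. mneg M x \<in> mcar M) \<and>
     (\<forall>x\<in>mcar M. \<forall>a. mact M x a \<in> mcar M) \<and>
     (\<forall>x\<in>mcar M. \<forall>y\<in>mcar M. \<forall>z\<in>mcar M. madd M (madd M x y) z = madd M x (madd M y z)) \<and>
     (\<forall>x\<in>mcar M. \<forall>y\<in>mcar M. madd M x y = madd M y x) \<and>
     (\<forall>x\<in>mcar M. madd M (mzero M) x = x) \<and>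
     (\<forall>x\<in>mcar M. madd M (mneg M x) x = mzero M) \<and>
     (\<forall>x\<in>mcar M. mact M x 1 = x) \<and>
     (\<forall>x\<in>mcar M. \<forall>a b. mact M x (a * b) = mact M (mact M x a) b) \<and>
     (\<forall>x\<in>mcar M. \<forall>y\<in>mcar M. \<forall>a. mact M (madd M x y) a = madd M (mact M x a) (mact M y a)) \<and>
     (\<forall>x\<in>mcar M. \<forall>a b. mact M x (a + b) = madd M (mact M x a) (mact M x b))"

definition module_hom :: "('m,'g::ring_1) rmod \<Rightarrow> ('n,'g) rmod \<Rightarrow> ('m \<Rightarrow> 'n) \<Rightarrow> bool" where
  "module_hom M N f \<longleftrightarrow>
     (\<forall>x\<in>mcar M. f x \<in> mcar N) \<and>
     (\<forall>x\<in>mcar M. \<forall>y\<in>mcar M. f (madd M x y) = madd N (f x) (f y)) \<and>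
     (\<forall>x\<in>mcar M. \<forall>a. f (mact M x a) = mact N (f x) a)"

definition free_mod :: "nat \<Rightarrow> (nat \<Rightarrow> 'g::ring_1, 'g) rmod" where
  "free_mod m = \<lparr> mcar = {v. \<forall>i\<ge>m. v i = 0},
                  madd = (\<lambda>v w i. v i + w i),
                  mzero = (\<lambda>i. 0),
                  mneg = (\<lambda>v i. - v i),
                  mact = (\<lambda>v a i. v i * a) \<rparr>"

text \<open>finitely generated projective = direct summand of a finite free module\<close>
definition fg_projective :: "('m,'g::ring_1) rmod \<Rightarrow> bool" where
  "fg_projective P \<longleftrightarrow> (\<exists>m s r. module_hom P (free_mod m) s \<and> module_hom (free_mod m) P r \<and>
                                  (\<forall>x\<in>mcar P. r (s x) = x))"

definition k_algebra :: "('k::field \<Rightarrow> 'g::ring_1) \<Rightarrow> bool" where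
  "k_algebra \<iota> \<longleftrightarrow> \<iota> 1 = 1 \<and> (\<forall>a b. \<iota> (a + b) = \<iota> a + \<iota> b) \<and>
                    (\<forall>a b. \<iota> (a * b) = \<iota> a * \<iota> b) \<and> (\<forall>a g. \<iota> a * g = g * \<iota> a)"

text \<open>Exactness of 0 -> M -beta-> P_(n-1) -d_(n-1)-> ... -d_1-> P_0 -alpha-> M -> 0.
  The map into P_i is beta (if i = n-1) or d_(i+1); the map out of P_i is alpha (if i = 0) or d_i.\<close>
definition exact_seq :: "nat \<Rightarrow> (nat \<Rightarrow> ('m,'g::ring_1) rmod) \<Rightarrow> (nat \<Rightarrow> 'm \<Rightarrow> 'm)
     \<Rightarrow> ('m,'g) rmod \<Rightarrow> ('m \<Rightarrow> 'm) \<Rightarrow> ('m \<Rightarrow> 'm) \<Rightarrow> bool" where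
  "exact_seq n P d M \<alpha> \<beta> \<longleftrightarrow>
     inj_on \<beta> (mcar M) \<and>
     \<alpha> ` mcar (P 0) = mcar M \<and>
     (\<forall>i<n. (if i = n - 1 then \<beta> else d (i + 1)) ` mcar (if i = n - 1 then M else P (i + 1))
             = {x \<in> mcar (P i). (if i = 0 then \<alpha> else d i) x = mzero (if i = 0 then M else P (i - 1))})"

definition zero_mod :: "('m,'g) rmod \<Rightarrow> ('m,'g) rmod" where
  "zero_mod Q = \<lparr> mcar = {mzero Q}, madd = (\<lambda>_ _. mzero Q), mzero = mzero Q,
                  mneg = (\<lambda>_. mzero Q), mact = (\<lambda>_ _. mzero Q) \<rparr>"

text \<open>Component of \<P> in cohomological degree j: degree -(l*n+i) is (the l-th copy of) P_i.\<close>
definition cpx :: "nat \<Rightarrow> (nat \<Rightarrow> ('m,'g) rmod) \<Rightarrow> int \<Rightarrow> ('m,'g) rmod" where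
  "cpx n P j = (if j \<le> 0 then P (nat (- j) mod n) else zero_mod (P 0))"

definition sgn_app :: "('m,'g) rmod \<Rightarrow> int \<Rightarrow> 'm \<Rightarrow> 'm" where
  "sgn_app Q e x = (if even e then x else mneg Q x)"

text \<open>Differential of \<P> from degree j to degree j+1.  For -j = l*n+i with i \<ge> 1 it is
  (-1)^(l n) d_i; for -j = l*n with l \<ge> 1 it is (-1)^((l-1) n) d_0, d_0 = beta o alpha.\<close>
definition dP :: "nat \<Rightarrow> (nat \<Rightarrow> ('m,'g) rmod) \<Rightarrow> (nat \<Rightarrow> 'm \<Rightarrow> 'm) \<Rightarrow> ('m \<Rightarrow> 'm) \<Rightarrow> ('m \<Rightarrow> 'm)
     \<Rightarrow> int \<Rightarrow> 'm \<Rightarrow> 'm" where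
  "dP n P d \<alpha> \<beta> j x =
     (if j \<le> -1 then
        (let N = nat (- j); l = N div n; i = N mod n in
          if i \<ge> 1 then sgn_app (P (i - 1)) (int (l * n)) (d i x)
          else sgn_app (P (n - 1)) (int ((l - 1) * n)) (\<beta> (\<alpha> x)))
      else mzero (cpx n P (j + 1)))"

definition restr :: "'a set \<Rightarrow> ('a \<Rightarrow> 'b) \<Rightarrow> 'a \<Rightarrow> 'b" where
  "restr A f = (\<lambda>x. if x \<in> A then f x else undefined)"

text \<open>Homogeneous elements of \<E> of degree i: families of Gamma-maps \<P>^j -> \<P>^(j+i)
  (extensional: undefined outside the carriers).\<close>
definition Ehom :: "nat \<Rightarrow> (nat \<Rightarrow> ('m,'g::ring_1) rmod) \<Rightarrow> int \<Rightarrow> (int \<Rightarrow> 'm \<Rightarrow> 'm) set" where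
  "Ehom n P i = {f. \<forall>j. module_hom (cpx n P j) (cpx n P (j + i)) (f j) \<and>
                      (\<forall>x. x \<notin> mcar (cpx n P j) \<longrightarrow> f j x = undefined)}"

definition ecomp :: "nat \<Rightarrow> (nat \<Rightarrow> ('m,'g) rmod) \<Rightarrow> int \<Rightarrow> (int \<Rightarrow> 'm \<Rightarrow> 'm) \<Rightarrow> (int \<Rightarrow> 'm \<Rightarrow> 'm)
     \<Rightarrow> int \<Rightarrow> 'm \<Rightarrow> 'm" where
  "ecomp n P i' f g = (\<lambda>j. restr (mcar (cpx n P j)) (\<lambda>x. f (j + i') (g j x)))"

definition eadd :: "nat \<Rightarrow> (nat \<Rightarrow> ('m,'g) rmod) \<Rightarrow> int \<Rightarrow> (int \<Rightarrow> 'm \<Rightarrow> 'm) \<Rightarrow> (int \<Rightarrow> 'm \<Rightarrow> 'm)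
     \<Rightarrow> int \<Rightarrow> 'm \<Rightarrow> 'm" where
  "eadd n P i f g = (\<lambda>j. restr (mcar (cpx n P j)) (\<lambda>x. madd (cpx n P (j + i)) (f j x) (g j x)))"

definition ezero :: "nat \<Rightarrow> (nat \<Rightarrow> ('m,'g) rmod) \<Rightarrow> int \<Rightarrow> int \<Rightarrow> 'm \<Rightarrow> 'm" where
  "ezero n P i = (\<lambda>j. restr (mcar (cpx n P j)) (\<lambda>x. mzero (cpx n P (j + i))))"

definition eneg :: "nat \<Rightarrow> (nat \<Rightarrow> ('m,'g) rmod) \<Rightarrow> int \<Rightarrow> (int \<Rightarrow> 'm \<Rightarrow> 'm) \<Rightarrow> int \<Rightarrow> 'm \<Rightarrow> 'm" where
  "eneg n P i f = (\<lambda>j. restr (mcar (cpx n P j)) (\<lambda>x. mneg (cpx n P (j + i)) (f j x)))"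

definition esmult :: "nat \<Rightarrow> (nat \<Rightarrow> ('m,'g) rmod) \<Rightarrow> ('k \<Rightarrow> 'g) \<Rightarrow> int \<Rightarrow> 'k
     \<Rightarrow> (int \<Rightarrow> 'm \<Rightarrow> 'm) \<Rightarrow> int \<Rightarrow> 'm \<Rightarrow> 'm" where
  "esmult n P \<iota> i c f = (\<lambda>j. restr (mcar (cpx n P j)) (\<lambda>x. mact (cpx n P (j + i)) (f j x) (\<iota> c)))"

definition esign :: "nat \<Rightarrow> (nat \<Rightarrow> ('m,'g) rmod) \<Rightarrow> int \<Rightarrow> int \<Rightarrow> (int \<Rightarrow> 'm \<Rightarrow> 'm) \<Rightarrow> int \<Rightarrow> 'm \<Rightarrow> 'm" where
  "esign n P i e f = (if even e then f else eneg n P i f)"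

definition dPe :: "nat \<Rightarrow> (nat \<Rightarrow> ('m,'g) rmod) \<Rightarrow> (nat \<Rightarrow> 'm \<Rightarrow> 'm) \<Rightarrow> ('m \<Rightarrow> 'm) \<Rightarrow> ('m \<Rightarrow> 'm)
     \<Rightarrow> int \<Rightarrow> 'm \<Rightarrow> 'm" where
  "dPe n P d \<alpha> \<beta> = (\<lambda>j. restr (mcar (cpx n P j)) (dP n P d \<alpha> \<beta> j))"

definition edelta :: "nat \<Rightarrow> (nat \<Rightarrow> ('m,'g) rmod) \<Rightarrow> (nat \<Rightarrow> 'm \<Rightarrow> 'm) \<Rightarrow> ('m \<Rightarrow> 'm) \<Rightarrow> ('m \<Rightarrow> 'm)
     \<Rightarrow> int \<Rightarrow> (int \<Rightarrow> 'm \<Rightarrow> 'm) \<Rightarrow> int \<Rightarrow> 'm \<Rightarrow> 'm" where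
  "edelta n P d \<alpha> \<beta> i f =
     eadd n P (i + 1) (ecomp n P i (dPe n P d \<alpha> \<beta>) f)
                      (esign n P (i + 1) (i + 1) (ecomp n P 1 f (dPe n P d \<alpha> \<beta>)))"

text \<open>sigma in \<E>^n: identity from the l-th copy of P_i to the (l-1)-th copy (l \<ge> 1), zero on copy 0\<close>
definition sigmaE :: "nat \<Rightarrow> (nat \<Rightarrow> ('m,'g) rmod) \<Rightarrow> int \<Rightarrow> 'm \<Rightarrow> 'm" where
  "sigmaE n P = (\<lambda>j. restr (mcar (cpx n P j))
                        (\<lambda>x. if j \<le> - int n then x else mzero (cpx n P (j + int n))))"

definition identE :: "nat \<Rightarrow> (nat \<Rightarrow> ('m,'g) rmod) \<Rightarrow> int \<Rightarrow> 'm \<Rightarrow> 'm" where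
  "identE n P = (\<lambda>j. restr (mcar (cpx n P j)) (\<lambda>x. x))"

definition sigE :: "nat \<Rightarrow> (nat \<Rightarrow> ('m,'g::ring_1) rmod) \<Rightarrow> int \<Rightarrow> (int \<Rightarrow> 'm \<Rightarrow> 'm) set" where
  "sigE n P i = {x \<in> Ehom n P i.
      ecomp n P i (sigmaE n P) x = esign n P (i + int n) (int n * i) (ecomp n P (int n) x (sigmaE n P))}"

definition msigE :: "nat \<Rightarrow> (nat \<Rightarrow> ('m,'g::ring_1) rmod) \<Rightarrow> int \<Rightarrow> (int \<Rightarrow> 'm \<Rightarrow> 'm) set" where
  "msigE n P i = {y \<in> Ehom n P i.
      ecomp n P i (sigmaE n P) y = esign n P (i + int n) (int n * (i + 1)) (ecomp n P (int n) y (sigmaE n P))}"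

type_synonym 'm Telem = "(int \<Rightarrow> 'm \<Rightarrow> 'm) \<times> (int \<Rightarrow> 'm \<Rightarrow> 'm)"

definition Tcar :: "nat \<Rightarrow> (nat \<Rightarrow> ('m,'g::ring_1) rmod) \<Rightarrow> int \<Rightarrow> 'm Telem set" where
  "Tcar n P j = {(x, y). x \<in> sigE n P j \<and> y \<in> msigE n P (j - int n + 1)}"

definition Tadd :: "nat \<Rightarrow> (nat \<Rightarrow> ('m,'g) rmod) \<Rightarrow> int \<Rightarrow> 'm Telem \<Rightarrow> 'm Telem \<Rightarrow> 'm Telem" where
  "Tadd n P j p q = (eadd n P j (fst p) (fst q), eadd n P (j - int n + 1) (snd p) (snd q))"

definition Tzero :: "nat \<Rightarrow> (nat \<Rightarrow> ('m,'g) rmod) \<Rightarrow> int \<Rightarrow> 'm Telem" where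
  "Tzero n P j = (ezero n P j, ezero n P (j - int n + 1))"

definition Tneg :: "nat \<Rightarrow> (nat \<Rightarrow> ('m,'g) rmod) \<Rightarrow> int \<Rightarrow> 'm Telem \<Rightarrow> 'm Telem" where
  "Tneg n P j p = (eneg n P j (fst p), eneg n P (j - int n + 1) (snd p))"

definition Tsmult :: "nat \<Rightarrow> (nat \<Rightarrow> ('m,'g) rmod) \<Rightarrow> ('k \<Rightarrow> 'g) \<Rightarrow> int \<Rightarrow> 'k \<Rightarrow> 'm Telem \<Rightarrow> 'm Telem" where
  "Tsmult n P \<iota> j c p = (esmult n P \<iota> j c (fst p), esmult n P \<iota> (j - int n + 1) c (snd p))"

text \<open>(x,y)\<cdot>(a,b) = (x o a, x o b + (-1)^(|a|(|sigma|+1)) y o a), with (x,y) of degree j, (a,b) of degree j'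
  (so |x| = j, |y| = j-n+1, |a| = j', |b| = j'-n+1).\<close>
definition Tmul :: "nat \<Rightarrow> (nat \<Rightarrow> ('m,'g) rmod) \<Rightarrow> int \<Rightarrow> int \<Rightarrow> 'm Telem \<Rightarrow> 'm Telem \<Rightarrow> 'm Telem" where
  "Tmul n P j j' p q =
     (ecomp n P j' (fst p) (fst q),
      eadd n P (j + j' - int n + 1)
        (ecomp n P (j' - int n + 1) (fst p) (snd q))
        (esign n P (j + j' - int n + 1) (j' * (int n + 1)) (ecomp n P j' (snd p) (fst q))))"

definition Tone :: "nat \<Rightarrow> (nat \<Rightarrow> ('m,'g) rmod) \<Rightarrow> 'm Telem" where
  "Tone n P = (identE n P, ezero n P (1 - int n))"

definition Tdif :: "nat \<Rightarrow> (nat \<Rightarrow> ('m,'g) rmod) \<Rightarrow> (nat \<Rightarrow> 'm \<Rightarrow> 'm) \<Rightarrow> ('m \<Rightarrow> 'm) \<Rightarrow> ('m \<Rightarrow> 'm)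
     \<Rightarrow> int \<Rightarrow> 'm Telem \<Rightarrow> 'm Telem" where
  "Tdif n P d \<alpha> \<beta> j p =
     (eadd n P (j + 1) (edelta n P d \<alpha> \<beta> j (fst p))
                       (esign n P (j + 1) (j + 1) (ecomp n P (int n) (snd p) (sigmaE n P))),
      edelta n P d \<alpha> \<beta> (j - int n + 1) (snd p))"

definition kvs :: "'a set \<Rightarrow> ('a \<Rightarrow> 'a \<Rightarrow> 'a) \<Rightarrow> 'a \<Rightarrow> ('a \<Rightarrow> 'a) \<Rightarrow> ('k::field \<Rightarrow> 'a \<Rightarrow> 'a) \<Rightarrow> bool" where
  "kvs V add z neg sm \<longleftrightarrow>
     z \<in> V \<and> (\<forall>a\<in>V. \<forall>b\<in>V. add a b \<in> V) \<and> (\<forall>a\<in>V. neg a \<in> V) \<and> (\<forall>c. \<forall>a\<in>V. sm c a \<in> V) \<and>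
     (\<forall>a\<in>V. \<forall>b\<in>V. \<forall>e\<in>V. add (add a b) e = add a (add b e)) \<and>
     (\<forall>a\<in>V. \<forall>b\<in>V. add a b = add b a) \<and>
     (\<forall>a\<in>V. add z a = a) \<and> (\<forall>a\<in>V. add (neg a) a = z) \<and>
     (\<forall>a\<in>V. sm 1 a = a) \<and> (\<forall>c c'. \<forall>a\<in>V. sm (c * c') a = sm c (sm c' a)) \<and>
     (\<forall>c. \<forall>a\<in>V. \<forall>b\<in>V. sm c (add a b) = add (sm c a) (sm c b)) \<and>
     (\<forall>c c'. \<forall>a\<in>V. sm (c + c') a = add (sm c a) (sm c' a))"

definition gsign :: "('a \<Rightarrow> 'a) \<Rightarrow> int \<Rightarrow> 'a \<Rightarrow> 'a" where
  "gsign neg e a = (if even e then a else neg a)"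

definition dg_algebra :: "(int \<Rightarrow> 'a set) \<Rightarrow> (int \<Rightarrow> 'a \<Rightarrow> 'a \<Rightarrow> 'a) \<Rightarrow> (int \<Rightarrow> 'a) \<Rightarrow> (int \<Rightarrow> 'a \<Rightarrow> 'a)
     \<Rightarrow> (int \<Rightarrow> 'k::field \<Rightarrow> 'a \<Rightarrow> 'a) \<Rightarrow> (int \<Rightarrow> int \<Rightarrow> 'a \<Rightarrow> 'a \<Rightarrow> 'a) \<Rightarrow> 'a \<Rightarrow> (int \<Rightarrow> 'a \<Rightarrow> 'a) \<Rightarrow> bool" where
  "dg_algebra V add z neg sm mul one dif \<longleftrightarrow>
     (\<forall>i. kvs (V i) (add i) (z i) (neg i) (sm i)) \<and>
     \<comment> \<open>graded, bilinear, associative, unital multiplication\<close>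
     (\<forall>i j. \<forall>a\<in>V i. \<forall>b\<in>V j. mul i j a b \<in> V (i + j)) \<and>
     (\<forall>i j. \<forall>a\<in>V i. \<forall>a'\<in>V i. \<forall>b\<in>V j. mul i j (add i a a') b = add (i + j) (mul i j a b) (mul i j a' b)) \<and>
     (\<forall>i j. \<forall>a\<in>V i. \<forall>b\<in>V j. \<forall>b'\<in>V j. mul i j a (add j b b') = add (i + j) (mul i j a b) (mul i j a b')) \<and>
     (\<forall>i j c. \<forall>a\<in>V i. \<forall>b\<in>V j. mul i j (sm i c a) b = sm (i + j) c (mul i j a b)) \<and>
     (\<forall>i j c. \<forall>a\<in>V i. \<forall>b\<in>V j. mul i j a (sm j c b) = sm (i + j) c (mul i j a b)) \<and>
     (\<forall>i j l. \<forall>a\<in>V i. \<forall>b\<in>V j. \<forall>e\<in>V l. mul (i + j) l (mul i j a b) e = mul i (j + l) a (mul j l b e)) \<and>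
     one \<in> V 0 \<and>
     (\<forall>i. \<forall>a\<in>V i. mul 0 i one a = a \<and> mul i 0 a one = a) \<and>
     \<comment> \<open>differential: linear of degree 1, square zero, graded Leibniz rule\<close>
     (\<forall>i. \<forall>a\<in>V i. dif i a \<in> V (i + 1)) \<and>
     (\<forall>i. \<forall>a\<in>V i. \<forall>b\<in>V i. dif i (add i a b) = add (i + 1) (dif i a) (dif i b)) \<and>
     (\<forall>i c. \<forall>a\<in>V i. dif i (sm i c a) = sm (i + 1) c (dif i a)) \<and>
     (\<forall>i. \<forall>a\<in>V i. dif (i + 1) (dif i a) = z (i + 2)) \<and>
     (\<forall>i j. \<forall>a\<in>V i. \<forall>b\<in>V j.
        dif (i + j) (mul i j a b) =
          add (i + j + 1) (mul (i + 1) j (dif i a) b) (gsign (neg (i + j + 1)) i (mul i (j + 1) a (dif j b))))"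

end

theory Submission
  imports Defs
begin

(* The trivial extension is defined for any DG algebra A and any cycle s of degree n.  Write
   ^e A^i for the degree i elements x with s x = (-1)^e x s; then ^sigma A^i = ^(n i) A^i and
   ^(-sigma) A^i = ^(n (i+1)) A^i are subspaces, products add the exponents e, and since d s = 0
   the differential adds n to them.  Hence T is closed under its operations, and its axioms follow
   from those of A: in the Leibniz rule the cross term y s a equals (-1)^(n |a|) y a s, and the
   terms y s b and y b s cancel because s b = (-1)^(n (|b| + 1)) b s.

   For A = End(P) the differential is the graded commutator with d_P, which gives a DG algebra
   because d_P o d_P = 0; with d_0 = beta o alpha the resolution is P repeated with period n, so
   this is exactness of 0 -> M -> P_(n-1) -> ... -> P_0 -> M -> 0 at each P_i.  Finally sigma is
   a cycle, d_P sigma = (-1)^n sigma d_P, because the l-th copy of P carries the sign (-1)^(l n). *)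

lemma gsign_even [simp]: "even e \<Longrightarrow> gsign ng e a = a"
  by (simp add: gsign_def)

lemma gsign_odd [simp]: "odd e \<Longrightarrow> gsign ng e a = ng a"
  by (simp add: gsign_def)

locale abgroup_on =
  fixes S :: "'a set" and ad :: "'a \<Rightarrow> 'a \<Rightarrow> 'a" and z :: 'a and ng :: "'a \<Rightarrow> 'a"
  assumes zero_closed [simp]: "z \<in> S"
    and add_closed [simp]: "a \<in> S \<Longrightarrow> b \<in> S \<Longrightarrow> ad a b \<in> S"
    and neg_closed [simp]: "a \<in> S \<Longrightarrow> ng a \<in> S"
    and add_assoc: "a \<in> S \<Longrightarrow> b \<in> S \<Longrightarrow> c \<in> S \<Longrightarrow> ad (ad a b) c = ad a (ad b c)"
    and add_comm: "a \<in> S \<Longrightarrow> b \<in> S \<Longrightarrow> ad a b = ad b a"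
    and zero_add [simp]: "a \<in> S \<Longrightarrow> ad z a = a"
    and neg_add [simp]: "a \<in> S \<Longrightarrow> ad (ng a) a = z"
begin

lemma add_zero [simp]: "a \<in> S \<Longrightarrow> ad a z = a"
  by (metis add_comm zero_add zero_closed)

lemma add_neg [simp]: "a \<in> S \<Longrightarrow> ad a (ng a) = z"
  by (metis add_comm neg_add neg_closed)

lemma add_left_commute: "a \<in> S \<Longrightarrow> b \<in> S \<Longrightarrow> c \<in> S \<Longrightarrow> ad a (ad b c) = ad b (ad a c)"
  by (metis add_assoc add_comm)

lemmas add_ac = add_assoc add_comm add_left_commute

lemma neg_add_cancel_left [simp]: "a \<in> S \<Longrightarrow> b \<in> S \<Longrightarrow> ad (ng a) (ad a b) = b"
  by (simp flip: add_assoc)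

lemma add_left_cancel:
  assumes "a \<in> S" "b \<in> S" "c \<in> S" "ad a b = ad a c"
  shows "b = c"
  by (metis assms neg_add_cancel_left neg_closed)

lemma neg_unique: "a \<in> S \<Longrightarrow> b \<in> S \<Longrightarrow> ad a b = z \<Longrightarrow> b = ng a"
  by (metis add_left_cancel add_neg neg_closed)

lemma zero_unique: "a \<in> S \<Longrightarrow> ad a a = a \<Longrightarrow> a = z"
  by (metis add_left_cancel add_zero zero_closed)

lemma neg_neg [simp]: "a \<in> S \<Longrightarrow> ng (ng a) = a"
  by (metis neg_add neg_closed neg_unique)

lemma neg_zero [simp]: "ng z = z"
  by (metis neg_unique zero_add zero_closed)

lemma neg_add_distrib: "a \<in> S \<Longrightarrow> b \<in> S \<Longrightarrow> ng (ad a b) = ad (ng a) (ng b)"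
  by (rule neg_unique[symmetric]) (simp_all add: add_ac)

lemma gsign_closed [simp]: "a \<in> S \<Longrightarrow> gsign ng e a \<in> S"
  by (simp add: gsign_def)

lemma gsign_zero [simp]: "gsign ng e z = z"
  by (simp add: gsign_def)

lemma gsign_add: "a \<in> S \<Longrightarrow> b \<in> S \<Longrightarrow> gsign ng e (ad a b) = ad (gsign ng e a) (gsign ng e b)"
  by (simp add: gsign_def neg_add_distrib)

lemma gsign_gsign: "a \<in> S \<Longrightarrow> gsign ng e (gsign ng e' a) = gsign ng (e + e') a"
  by (simp add: gsign_def)

lemma gsign_cong: "even (e - e') \<Longrightarrow> gsign ng e a = gsign ng e' a"
  by (auto simp add: gsign_def)

lemma gsign_cancel: "a \<in> S \<Longrightarrow> odd (e - e') \<Longrightarrow> ad (gsign ng e a) (gsign ng e' a) = z"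
  by (cases "even e") (auto simp add: gsign_def)

lemma gsign_add_cancel_middle:
  assumes "a \<in> S" "b \<in> S" "m \<in> S" "odd (e1 - e2)"
  shows "ad (ad a (gsign ng e1 m)) (gsign ng e2 (ad m (gsign ng e3 b))) = ad a (gsign ng (e2 + e3) b)"
proof -
  have "ad (gsign ng e1 m) (gsign ng e2 m) = z"
    using assms by (simp add: gsign_cancel)
  then show ?thesis
    using assms by (simp add: gsign_add gsign_gsign flip: add_assoc) (simp add: add_assoc)
qed

lemma signed_sum_permute:
  assumes "a \<in> S" "b \<in> S" "c \<in> S" "d \<in> S"
    and "even (e2 + e3 - e4)" and "even (e2 - e1 - e5)"
  shows "ad (ad a (gsign ng e1 b)) (gsign ng e2 (ad c (gsign ng e3 d)))
       = ad (ad a (gsign ng e4 d)) (gsign ng e1 (ad b (gsign ng e5 c)))"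
proof -
  have "gsign ng (e2 + e3) d = gsign ng e4 d" "gsign ng e2 c = gsign ng (e1 + e5) c"
    using assms(5,6) by (auto intro: gsign_cong)
  with assms(1-4) show ?thesis
    by (simp add: gsign_add gsign_gsign add_ac)
qed

lemma signed_sum_permute_cancel:
  assumes "a \<in> S" "b \<in> S" "c \<in> S" "d \<in> S" "v \<in> S"
    and "even (e2 + e3 - (e1 + f2))" and "odd (f1 - (e1 + f2 + f3))"
  shows "ad (ad a (gsign ng e1 b)) (gsign ng e2 (ad c (gsign ng e3 d)))
       = ad (ad (ad a (gsign ng f1 v)) (gsign ng e2 c)) (gsign ng e1 (ad b (gsign ng f2 (ad d (gsign ng f3 v)))))"
proof -
  have "gsign ng (e2 + e3) d = gsign ng (e1 + f2) d"
    using assms(6) by (rule gsign_cong)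
  moreover have "ad (gsign ng f1 v) (gsign ng (e1 + (f2 + f3)) v) = z"
    using assms(5,7) by (simp add: gsign_cancel add.assoc)
  ultimately show ?thesis
    using assms(1-5) by (simp add: gsign_add gsign_gsign add_ac)
qed

end

lemma kvs_abgroup_on: "kvs V ad z ng sm \<Longrightarrow> abgroup_on V ad z ng"
  unfolding kvs_def abgroup_on_def by auto

lemma kvs_subspace:
  assumes "kvs V ad z ng sm" and "U \<subseteq> V" and "z \<in> U"
    and "\<And>a b. a \<in> U \<Longrightarrow> b \<in> U \<Longrightarrow> ad a b \<in> U" and "\<And>a. a \<in> U \<Longrightarrow> ng a \<in> U"
    and "\<And>c a. a \<in> U \<Longrightarrow> sm c a \<in> U"
  shows "kvs U ad z ng sm"
  using assms(1) unfolding kvs_def using assms(2-) by (simp only: Ball_def) (meson subsetD)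

lemma kvs_Times:
  assumes "kvs V ad z ng sm" and "kvs V' ad' z' ng' sm'"
  shows "kvs (V \<times> V') (\<lambda>p q. (ad (fst p) (fst q), ad' (snd p) (snd q))) (z, z')
           (\<lambda>p. (ng (fst p), ng' (snd p))) (\<lambda>c p. (sm c (fst p), sm' c (snd p)))"
  using assms unfolding kvs_def by auto

section \<open>Graded algebras and DG algebras\<close>

locale graded_algebra =
  fixes V :: "int \<Rightarrow> 'a set" and add :: "int \<Rightarrow> 'a \<Rightarrow> 'a \<Rightarrow> 'a" and z :: "int \<Rightarrow> 'a"
    and neg :: "int \<Rightarrow> 'a \<Rightarrow> 'a" and sm :: "int \<Rightarrow> 'k::field \<Rightarrow> 'a \<Rightarrow> 'a"
    and mul :: "int \<Rightarrow> int \<Rightarrow> 'a \<Rightarrow> 'a \<Rightarrow> 'a" and one :: 'a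
  assumes kvs: "kvs (V i) (add i) (z i) (neg i) (sm i)"
    and mul_closed: "a \<in> V i \<Longrightarrow> b \<in> V j \<Longrightarrow> mul i j a b \<in> V (i + j)"
    and mul_add_left: "a \<in> V i \<Longrightarrow> a' \<in> V i \<Longrightarrow> b \<in> V j \<Longrightarrow>
      mul i j (add i a a') b = add (i + j) (mul i j a b) (mul i j a' b)"
    and mul_add_right: "a \<in> V i \<Longrightarrow> b \<in> V j \<Longrightarrow> b' \<in> V j \<Longrightarrow>
      mul i j a (add j b b') = add (i + j) (mul i j a b) (mul i j a b')"
    and mul_smult_left: "a \<in> V i \<Longrightarrow> b \<in> V j \<Longrightarrow> mul i j (sm i c a) b = sm (i + j) c (mul i j a b)"
    and mul_smult_right: "a \<in> V i \<Longrightarrow> b \<in> V j \<Longrightarrow> mul i j a (sm j c b) = sm (i + j) c (mul i j a b)"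
    and mul_assoc: "a \<in> V i \<Longrightarrow> b \<in> V j \<Longrightarrow> e \<in> V l \<Longrightarrow>
      mul (i + j) l (mul i j a b) e = mul i (j + l) a (mul j l b e)"
    and one_closed: "one \<in> V 0"
    and mul_one_left: "a \<in> V i \<Longrightarrow> mul 0 i one a = a"
    and mul_one_right: "a \<in> V i \<Longrightarrow> mul i 0 a one = a"

sublocale graded_algebra \<subseteq> deg: abgroup_on "V i" "add i" "z i" "neg i" for i
  by (rule kvs_abgroup_on[OF kvs])

context graded_algebra
begin

(* Degrees are integer terms such as i + (j - n + 1) that simp does not normalise; these variants
   take the degree as an equation, which simp proves by arithmetic. *)

lemma mul_closed_idx [simp]: "a \<in> V i \<Longrightarrow> b \<in> V j \<Longrightarrow> i + j = k \<Longrightarrow> mul i j a b \<in> V k"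
  using mul_closed by blast

lemma zero_add_idx [simp]: "a \<in> V i \<Longrightarrow> j = i \<Longrightarrow> add i (z j) a = a"
  by simp

lemma add_zero_idx [simp]: "a \<in> V i \<Longrightarrow> j = i \<Longrightarrow> add i a (z j) = a"
  by simp

lemma gsign_zero_idx [simp]: "j = i \<Longrightarrow> gsign (neg i) e (z j) = z i"
  by simp

lemma smult_closed [simp]: "a \<in> V i \<Longrightarrow> sm i c a \<in> V i"
  using kvs unfolding kvs_def by blast

lemma smult_add: "a \<in> V i \<Longrightarrow> b \<in> V i \<Longrightarrow> sm i c (add i a b) = add i (sm i c a) (sm i c b)"
  using kvs unfolding kvs_def by blast

lemma smult_gsign: "a \<in> V i \<Longrightarrow> sm i c (gsign (neg i) e a) = gsign (neg i) e (sm i c a)"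
proof -
  assume a: "a \<in> V i"
  have "sm i c (z i) = z i"
    by (rule deg.zero_unique) (simp_all flip: smult_add)
  then have "add i (sm i c a) (sm i c (neg i a)) = z i"
    using a by (simp flip: smult_add)
  then have "sm i c (neg i a) = neg i (sm i c a)"
    using a by (simp add: deg.neg_unique)
  then show ?thesis by (simp add: gsign_def)
qed

lemma mul_zero_left [simp]: "b \<in> V j \<Longrightarrow> mul i j (z i) b = z (i + j)"
  by (rule deg.zero_unique) (simp_all flip: mul_add_left)

lemma mul_zero_right [simp]: "a \<in> V i \<Longrightarrow> mul i j a (z j) = z (i + j)"
  by (rule deg.zero_unique) (simp_all flip: mul_add_right)

lemma mul_gsign_left:
  assumes "a \<in> V i" "b \<in> V j"
  shows "mul i j (gsign (neg i) e a) b = gsign (neg (i + j)) e (mul i j a b)"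
proof -
  have "add (i + j) (mul i j a b) (mul i j (neg i a) b) = z (i + j)"
    using assms by (simp flip: mul_add_left)
  then show ?thesis
    using assms by (simp add: gsign_def deg.neg_unique)
qed

lemma mul_gsign_right:
  assumes "a \<in> V i" "b \<in> V j"
  shows "mul i j a (gsign (neg j) e b) = gsign (neg (i + j)) e (mul i j a b)"
proof -
  have "add (i + j) (mul i j a b) (mul i j a (neg j b)) = z (i + j)"
    using assms by (simp flip: mul_add_right)
  then show ?thesis
    using assms by (simp add: gsign_def deg.neg_unique)
qed

end

locale dga = graded_algebra +
  fixes dif :: "int \<Rightarrow> 'a \<Rightarrow> 'a"
  assumes dif_closed: "a \<in> V i \<Longrightarrow> dif i a \<in> V (i + 1)"
    and dif_add: "a \<in> V i \<Longrightarrow> b \<in> V i \<Longrightarrow> dif i (add i a b) = add (i + 1) (dif i a) (dif i b)"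
    and dif_smult: "a \<in> V i \<Longrightarrow> dif i (sm i c a) = sm (i + 1) c (dif i a)"
    and dif_dif: "a \<in> V i \<Longrightarrow> dif (i + 1) (dif i a) = z (i + 2)"
    and dif_mul: "a \<in> V i \<Longrightarrow> b \<in> V j \<Longrightarrow>
      dif (i + j) (mul i j a b) =
        add (i + j + 1) (mul (i + 1) j (dif i a) b) (gsign (neg (i + j + 1)) i (mul i (j + 1) a (dif j b)))"

lemma dg_algebra_iff_dga:
  "dg_algebra V add z neg sm mul one dif \<longleftrightarrow> dga V add z neg sm mul one dif"
  unfolding dg_algebra_def dga_def graded_algebra_def dga_axioms_def by auto

context dga
begin

lemma dif_closed_idx [simp]: "a \<in> V i \<Longrightarrow> i + 1 = k \<Longrightarrow> dif i a \<in> V k"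
  using dif_closed by blast

lemma dif_zero [simp]: "dif i (z i) = z (i + 1)"
  by (rule deg.zero_unique) (simp_all flip: dif_add)

lemma dif_gsign: "a \<in> V i \<Longrightarrow> dif i (gsign (neg i) e a) = gsign (neg (i + 1)) e (dif i a)"
proof -
  assume a: "a \<in> V i"
  have "add (i + 1) (dif i a) (dif i (neg i a)) = z (i + 1)"
    using a by (simp flip: dif_add)
  then show ?thesis
    using a by (simp add: gsign_def deg.neg_unique)
qed

end

context graded_algebra
begin

definition graded_commutator :: "'a \<Rightarrow> int \<Rightarrow> 'a \<Rightarrow> 'a" where
  "graded_commutator D i f = add (i + 1) (mul 1 i D f) (gsign (neg (i + 1)) (i + 1) (mul i 1 f D))"

context
  fixes D :: 'a
  assumes D_closed [simp]: "D \<in> V 1" and D_square: "mul 1 1 D D = z 2"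
begin

lemma graded_commutator_closed: "f \<in> V i \<Longrightarrow> graded_commutator D i f \<in> V (i + 1)"
  by (simp add: graded_commutator_def)

lemma graded_commutator_add:
  assumes "f \<in> V i" "g \<in> V i"
  shows "graded_commutator D i (add i f g) = add (i + 1) (graded_commutator D i f) (graded_commutator D i g)"
  using assms mul_add_right[of D 1 f i g] mul_add_left[of f i g D 1]
  by (simp add: graded_commutator_def deg.gsign_add deg.add_ac add.commute)

lemma graded_commutator_smult:
  assumes "f \<in> V i"
  shows "graded_commutator D i (sm i c f) = sm (i + 1) c (graded_commutator D i f)"
  using assms mul_smult_right[of D 1 f i c] mul_smult_left[of f i D 1 c]
  by (simp add: graded_commutator_def smult_add smult_gsign add.commute)

lemma graded_commutator_square:
  assumes f: "f \<in> V i"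
  shows "graded_commutator D (i + 1) (graded_commutator D i f) = z (i + 2)"
proof -
  define DfD where "DfD = mul (i + 1) 1 (mul 1 i D f) D"
  have DfD: "DfD \<in> V (i + 2)"
    using f by (simp add: DfD_def)
  have "mul 1 (i + 1) D (mul 1 i D f) = z (i + 2)"
    using f mul_assoc[of D 1 D 1 f i] by (simp add: D_square add.commute)
  moreover have "mul (i + 1) 1 (mul i 1 f D) D = z (i + 2)"
    using f mul_assoc[of f i D 1 D 1] by (simp add: D_square)
  moreover have "mul 1 (i + 1) D (mul i 1 f D) = DfD"
    using f mul_assoc[of D 1 f i D 1] by (simp add: DfD_def add.commute)
  ultimately have "graded_commutator D (i + 1) (graded_commutator D i f)
      = add (i + 2) (gsign (neg (i + 2)) (i + 1) DfD) (gsign (neg (i + 2)) (i + 1 + 1) DfD)"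
    using f DfD by (simp add: graded_commutator_def mul_add_left mul_add_right mul_gsign_left
        mul_gsign_right DfD_def deg.gsign_add deg.gsign_gsign add.commute)
  also have "\<dots> = z (i + 2)"
    using DfD by (simp add: deg.gsign_cancel)
  finally show ?thesis .
qed

lemma graded_commutator_mul:
  assumes f: "f \<in> V i" and g: "g \<in> V j"
  shows "graded_commutator D (i + j) (mul i j f g)
       = add (i + j + 1) (mul (i + 1) j (graded_commutator D i f) g)
           (gsign (neg (i + j + 1)) i (mul i (j + 1) f (graded_commutator D j g)))"
proof -
  have idx: "1 + i = i + 1" "1 + j = j + 1" "i + 1 + j = i + j + 1" "i + (j + 1) = i + j + 1"
    by simp_all
  define M where "M = mul i (j + 1) f (mul 1 j D g)"
  have M: "M \<in> V (i + j + 1)"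
    using f g by (simp add: M_def)
  have "mul (i + 1) j (mul 1 i D f) g = mul 1 (i + j) D (mul i j f g)"
    using f g mul_assoc[of D 1 f i g j] by (simp add: idx)
  moreover have "mul (i + 1) j (mul i 1 f D) g = M"
    using f g mul_assoc[of f i D 1 g j] by (simp add: M_def idx)
  moreover have "mul i (j + 1) f (mul j 1 g D) = mul (i + j) 1 (mul i j f g) D"
    using f g mul_assoc[of f i g j D 1] by simp
  ultimately have "add (i + j + 1) (mul (i + 1) j (graded_commutator D i f) g)
        (gsign (neg (i + j + 1)) i (mul i (j + 1) f (graded_commutator D j g)))
      = add (i + j + 1) (add (i + j + 1) (mul 1 (i + j) D (mul i j f g)) (gsign (neg (i + j + 1)) (i + 1) M))
          (gsign (neg (i + j + 1)) i (add (i + j + 1) M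
            (gsign (neg (i + j + 1)) (j + 1) (mul (i + j) 1 (mul i j f g) D))))"
    using f g by (simp add: graded_commutator_def mul_add_left mul_add_right mul_gsign_left
        mul_gsign_right M_def idx)
  also have "\<dots> = graded_commutator D (i + j) (mul i j f g)"
    using f g M by (simp add: deg.gsign_add_cancel_middle graded_commutator_def idx)
  finally show ?thesis ..
qed

theorem dga_graded_commutator: "dga V add z neg sm mul one (graded_commutator D)"
  by unfold_locales
    (simp_all add: graded_commutator_closed graded_commutator_add graded_commutator_smult
      graded_commutator_square graded_commutator_mul)

end

end

section \<open>The trivial extension by a cycle\<close>

lemma even_mult_pred: "even ((k::int) * (k - 1))"
  by simp

locale dga_cycle = dga +
  fixes s :: 'a and n :: int
  assumes cycle_closed [simp]: "s \<in> V n"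
    and dif_cycle: "dif n s = z (n + 1)"
begin

lemma dif_mul_cycle_left:
  "a \<in> V i \<Longrightarrow> dif (n + i) (mul n i s a) = gsign (neg (n + i + 1)) n (mul n (i + 1) s (dif i a))"
  using dif_mul[of s n a i] by (simp add: dif_cycle ac_simps)

lemma dif_mul_cycle_right: "a \<in> V i \<Longrightarrow> dif (i + n) (mul i n a s) = mul (i + 1) n (dif i a) s"
  using dif_mul[of a i s n] by (simp add: dif_cycle ac_simps)

definition commutant :: "int \<Rightarrow> int \<Rightarrow> 'a set" where
  "commutant e i = {x \<in> V i. mul n i s x = gsign (neg (i + n)) e (mul i n x s)}"

lemma commutant_closed: "x \<in> commutant e i \<Longrightarrow> x \<in> V i"
  by (simp add: commutant_def)

lemma commutant_eq: "x \<in> commutant e i \<Longrightarrow> mul n i s x = gsign (neg (i + n)) e (mul i n x s)"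
  by (simp add: commutant_def)

lemma commutant_cong: "even (e - e') \<Longrightarrow> commutant e i = commutant e' i"
  unfolding commutant_def by (simp only: deg.gsign_cong[of e e'])

lemma zero_commutant: "z i \<in> commutant e i"
  by (simp add: commutant_def add.commute)

lemma cycle_commutant: "s \<in> commutant 0 n"
  by (simp add: commutant_def)

lemma one_commutant: "one \<in> commutant 0 0"
  by (simp add: commutant_def one_closed mul_one_left mul_one_right)

lemma add_commutant:
  assumes "x \<in> commutant e i" "y \<in> commutant e i"
  shows "add i x y \<in> commutant e i"
  using assms by (simp add: commutant_def mul_add_left mul_add_right deg.gsign_add add.commute)

lemma gsign_commutant: "x \<in> commutant e i \<Longrightarrow> gsign (neg i) e' x \<in> commutant e i"
  by (simp add: commutant_def mul_gsign_left mul_gsign_right deg.gsign_gsign add.commute)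

lemma neg_commutant: "x \<in> commutant e i \<Longrightarrow> neg i x \<in> commutant e i"
  using gsign_commutant[of x e i 1] by (simp add: gsign_def)

lemma smult_commutant: "x \<in> commutant e i \<Longrightarrow> sm i c x \<in> commutant e i"
  by (simp add: commutant_def mul_smult_left mul_smult_right smult_gsign add.commute)

lemma mul_commutant:
  assumes x: "x \<in> commutant e i" and y: "y \<in> commutant e' j"
  shows "mul i j x y \<in> commutant (e + e') (i + j)"
proof -
  have xV: "x \<in> V i" and yV: "y \<in> V j"
    using x y by (simp_all add: commutant_closed)
  have "mul n (i + j) s (mul i j x y) = mul (n + i) j (mul n i s x) y"
    using xV yV by (simp add: mul_assoc)
  also have "\<dots> = gsign (neg (i + j + n)) e (mul (i + n) j (mul i n x s) y)"
    using xV yV by (simp add: commutant_eq[OF x] mul_gsign_left ac_simps)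
  also have "mul (i + n) j (mul i n x s) y = mul i (n + j) x (mul n j s y)"
    using xV yV by (simp add: mul_assoc)
  also have "\<dots> = gsign (neg (i + j + n)) e' (mul i (j + n) x (mul j n y s))"
    using xV yV by (simp add: commutant_eq[OF y] mul_gsign_right ac_simps)
  also have "mul i (j + n) x (mul j n y s) = mul (i + j) n (mul i j x y) s"
    using xV yV by (simp add: mul_assoc)
  finally show ?thesis
    using xV yV by (simp add: commutant_def deg.gsign_gsign)
qed

lemma dif_commutant:
  assumes x: "x \<in> commutant e i"
  shows "dif i x \<in> commutant (e + n) (i + 1)"
proof -
  have xV: "x \<in> V i"
    using x by (simp add: commutant_closed)
  have "mul n (i + 1) s (dif i x) = gsign (neg (n + i + 1)) n (dif (n + i) (mul n i s x))"
    using xV by (simp add: dif_mul_cycle_left deg.gsign_gsign)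
  also have "\<dots> = gsign (neg (i + 1 + n)) (e + n) (mul (i + 1) n (dif i x) s)"
    using xV by (simp add: commutant_eq[OF x] dif_gsign dif_mul_cycle_right deg.gsign_gsign ac_simps)
  finally show ?thesis
    using xV by (simp add: commutant_def)
qed

definition sig_commutant :: "int \<Rightarrow> 'a set" where
  "sig_commutant i = commutant (n * i) i"

definition msig_commutant :: "int \<Rightarrow> 'a set" where
  "msig_commutant i = commutant (n * (i + 1)) i"

definition triv_car :: "int \<Rightarrow> ('a \<times> 'a) set" where
  "triv_car j = sig_commutant j \<times> msig_commutant (j - n + 1)"

definition triv_add :: "int \<Rightarrow> 'a \<times> 'a \<Rightarrow> 'a \<times> 'a \<Rightarrow> 'a \<times> 'a" where
  "triv_add j p q = (add j (fst p) (fst q), add (j - n + 1) (snd p) (snd q))"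

definition triv_zero :: "int \<Rightarrow> 'a \<times> 'a" where
  "triv_zero j = (z j, z (j - n + 1))"

definition triv_neg :: "int \<Rightarrow> 'a \<times> 'a \<Rightarrow> 'a \<times> 'a" where
  "triv_neg j p = (neg j (fst p), neg (j - n + 1) (snd p))"

definition triv_smult :: "int \<Rightarrow> 'b \<Rightarrow> 'a \<times> 'a \<Rightarrow> 'a \<times> 'a" where
  "triv_smult j c p = (sm j c (fst p), sm (j - n + 1) c (snd p))"

definition triv_mul :: "int \<Rightarrow> int \<Rightarrow> 'a \<times> 'a \<Rightarrow> 'a \<times> 'a \<Rightarrow> 'a \<times> 'a" where
  "triv_mul j j' p q =
     (mul j j' (fst p) (fst q),
      add (j + j' - n + 1) (mul j (j' - n + 1) (fst p) (snd q))
        (gsign (neg (j + j' - n + 1)) (j' * (n + 1)) (mul (j - n + 1) j' (snd p) (fst q))))"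

definition triv_one :: "'a \<times> 'a" where
  "triv_one = (one, z (1 - n))"

definition triv_dif :: "int \<Rightarrow> 'a \<times> 'a \<Rightarrow> 'a \<times> 'a" where
  "triv_dif j p =
     (add (j + 1) (dif j (fst p)) (gsign (neg (j + 1)) (j + 1) (mul (j - n + 1) n (snd p) s)),
      dif (j - n + 1) (snd p))"

lemma commutant_kvs: "kvs (commutant e i) (add i) (z i) (neg i) (sm i)"
  by (rule kvs_subspace[OF kvs])
    (auto simp: commutant_closed zero_commutant add_commutant neg_commutant smult_commutant)

lemma triv_kvs: "kvs (triv_car j) (triv_add j) (triv_zero j) (triv_neg j) (triv_smult j)"
  using kvs_Times[OF commutant_kvs commutant_kvs]
  unfolding triv_car_def sig_commutant_def msig_commutant_def triv_zero_def
    triv_add_def[abs_def] triv_neg_def[abs_def] triv_smult_def[abs_def] .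

lemma mem_triv_car:
  "(x, y) \<in> triv_car j \<longleftrightarrow> x \<in> commutant (n * j) j \<and> y \<in> commutant (n * (j - n + 2)) (j - n + 1)"
  by (simp add: triv_car_def sig_commutant_def msig_commutant_def algebra_simps)

lemma triv_carE:
  assumes "p \<in> triv_car j"
  obtains x y where "p = (x, y)" "x \<in> V j" "y \<in> V (j - n + 1)"
  using assms by (cases p) (auto simp: mem_triv_car dest: commutant_closed)

lemma triv_mul_closed:
  assumes "p \<in> triv_car i" "q \<in> triv_car j"
  shows "triv_mul i j p q \<in> triv_car (i + j)"
proof -
  obtain x y a b where pq: "p = (x, y)" "q = (a, b)" by (cases p, cases q)
  have x: "x \<in> commutant (n * i) i" and y: "y \<in> commutant (n * (i - n + 2)) (i - n + 1)"
    and a: "a \<in> commutant (n * j) j" and b: "b \<in> commutant (n * (j - n + 2)) (j - n + 1)"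
    using assms by (simp_all add: pq mem_triv_car)
  have "mul i j x a \<in> commutant (n * (i + j)) (i + j)"
    using mul_commutant[OF x a] by (simp add: algebra_simps)
  moreover have "mul i (j - n + 1) x b \<in> commutant (n * (i + j - n + 2)) (i + j - n + 1)"
    using mul_commutant[OF x b] by (simp add: algebra_simps)
  moreover have "mul (i - n + 1) j y a \<in> commutant (n * (i + j - n + 2)) (i + j - n + 1)"
    using mul_commutant[OF y a] by (simp add: algebra_simps)
  ultimately show ?thesis
    by (simp add: pq triv_mul_def mem_triv_car add_commutant gsign_commutant)
qed

lemma triv_mul_add_left:
  assumes "p \<in> triv_car i" "p' \<in> triv_car i" "q \<in> triv_car j"
  shows "triv_mul i j (triv_add i p p') q = triv_add (i + j) (triv_mul i j p q) (triv_mul i j p' q)"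
proof -
  obtain x y x' y' a b where pq: "p = (x, y)" "p' = (x', y')" "q = (a, b)"
    and V: "x \<in> V i" "y \<in> V (i - n + 1)" "x' \<in> V i" "y' \<in> V (i - n + 1)"
      "a \<in> V j" "b \<in> V (j - n + 1)"
    using assms by (elim triv_carE) auto
  have idx: "i + (j - n + 1) = i + j - n + 1" "i - n + 1 + j = i + j - n + 1"
    by simp_all
  have "mul i (j - n + 1) (add i x x') b = add (i + j - n + 1) (mul i (j - n + 1) x b) (mul i (j - n + 1) x' b)"
    using mul_add_left[of x i x' b "j - n + 1"] V by (simp add: idx)
  moreover have "mul (i - n + 1) j (add (i - n + 1) y y') a = add (i + j - n + 1) (mul (i - n + 1) j y a) (mul (i - n + 1) j y' a)"
    using mul_add_left[of y "i - n + 1" y' a j] V by (simp add: idx)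
  ultimately show ?thesis
    using V by (simp add: pq triv_mul_def triv_add_def mul_add_left deg.gsign_add deg.add_ac)
qed

lemma triv_mul_add_right:
  assumes "p \<in> triv_car i" "q \<in> triv_car j" "q' \<in> triv_car j"
  shows "triv_mul i j p (triv_add j q q') = triv_add (i + j) (triv_mul i j p q) (triv_mul i j p q')"
proof -
  obtain x y a b a' b' where pq: "p = (x, y)" "q = (a, b)" "q' = (a', b')"
    and V: "x \<in> V i" "y \<in> V (i - n + 1)" "a \<in> V j" "b \<in> V (j - n + 1)"
      "a' \<in> V j" "b' \<in> V (j - n + 1)"
    using assms by (elim triv_carE) auto
  have idx: "i + (j - n + 1) = i + j - n + 1" "i - n + 1 + j = i + j - n + 1"
    by simp_all
  have "mul i (j - n + 1) x (add (j - n + 1) b b') = add (i + j - n + 1) (mul i (j - n + 1) x b) (mul i (j - n + 1) x b')"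
    using mul_add_right[of x i b "j - n + 1" b'] V by (simp add: idx)
  moreover have "mul (i - n + 1) j y (add j a a') = add (i + j - n + 1) (mul (i - n + 1) j y a) (mul (i - n + 1) j y a')"
    using mul_add_right[of y "i - n + 1" a j a'] V by (simp add: idx)
  ultimately show ?thesis
    using V by (simp add: pq triv_mul_def triv_add_def mul_add_right deg.gsign_add deg.add_ac)
qed

lemma triv_mul_smult_left:
  assumes "p \<in> triv_car i" "q \<in> triv_car j"
  shows "triv_mul i j (triv_smult i c p) q = triv_smult (i + j) c (triv_mul i j p q)"
proof -
  obtain x y a b where pq: "p = (x, y)" "q = (a, b)"
    and V: "x \<in> V i" "y \<in> V (i - n + 1)" "a \<in> V j" "b \<in> V (j - n + 1)"
    using assms by (elim triv_carE) auto
  have idx: "i + (j - n + 1) = i + j - n + 1" "i - n + 1 + j = i + j - n + 1"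
    by simp_all
  have "mul i (j - n + 1) (sm i c x) b = sm (i + j - n + 1) c (mul i (j - n + 1) x b)"
    using mul_smult_left[of x i b "j - n + 1" c] V by (simp add: idx)
  moreover have "mul (i - n + 1) j (sm (i - n + 1) c y) a = sm (i + j - n + 1) c (mul (i - n + 1) j y a)"
    using mul_smult_left[of y "i - n + 1" a j c] V by (simp add: idx)
  ultimately show ?thesis
    using V by (simp add: pq triv_mul_def triv_smult_def mul_smult_left smult_add smult_gsign)
qed

lemma triv_mul_smult_right:
  assumes "p \<in> triv_car i" "q \<in> triv_car j"
  shows "triv_mul i j p (triv_smult j c q) = triv_smult (i + j) c (triv_mul i j p q)"
proof -
  obtain x y a b where pq: "p = (x, y)" "q = (a, b)"
    and V: "x \<in> V i" "y \<in> V (i - n + 1)" "a \<in> V j" "b \<in> V (j - n + 1)"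
    using assms by (elim triv_carE) auto
  have idx: "i + (j - n + 1) = i + j - n + 1" "i - n + 1 + j = i + j - n + 1"
    by simp_all
  have "mul i (j - n + 1) x (sm (j - n + 1) c b) = sm (i + j - n + 1) c (mul i (j - n + 1) x b)"
    using mul_smult_right[of x i b "j - n + 1" c] V by (simp add: idx)
  moreover have "mul (i - n + 1) j y (sm j c a) = sm (i + j - n + 1) c (mul (i - n + 1) j y a)"
    using mul_smult_right[of y "i - n + 1" a j c] V by (simp add: idx)
  ultimately show ?thesis
    using V by (simp add: pq triv_mul_def triv_smult_def mul_smult_right smult_add smult_gsign)
qed

lemma triv_one_closed: "triv_one \<in> triv_car 0"
  using one_commutant zero_commutant by (simp add: triv_one_def mem_triv_car)

lemma triv_mul_one_left: "p \<in> triv_car i \<Longrightarrow> triv_mul 0 i triv_one p = p"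
  by (elim triv_carE) (simp add: triv_mul_def triv_one_def mul_one_left)

lemma triv_mul_one_right: "p \<in> triv_car i \<Longrightarrow> triv_mul i 0 p triv_one = p"
  by (elim triv_carE) (simp add: triv_mul_def triv_one_def mul_one_right one_closed)

lemma triv_mul_assoc:
  assumes "p \<in> triv_car i" "q \<in> triv_car j" "r \<in> triv_car l"
  shows "triv_mul (i + j) l (triv_mul i j p q) r = triv_mul i (j + l) p (triv_mul j l q r)"
proof -
  obtain x y a b e f where pqr: "p = (x, y)" "q = (a, b)" "r = (e, f)"
    and V: "x \<in> V i" "y \<in> V (i - n + 1)" "a \<in> V j" "b \<in> V (j - n + 1)"
      "e \<in> V l" "f \<in> V (l - n + 1)"
    using assms by (elim triv_carE) auto
  have idx: "j + (l - n + 1) = j + l - n + 1" "i + (j - n + 1) = i + j - n + 1"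
    "j - n + 1 + l = j + l - n + 1" "i - n + 1 + j = i + j - n + 1"
    "i + j - n + 1 + l = i + j + l - n + 1" "i + (j + l) - n + 1 = i + j + l - n + 1"
    "i + (j + l - n + 1) = i + j + l - n + 1" "(j + l) * (n + 1) = l * (n + 1) + j * (n + 1)"
    by (simp_all add: algebra_simps)
  have "mul (i + j) (l - n + 1) (mul i j x a) f = mul i (j + l - n + 1) x (mul j (l - n + 1) a f)"
    using mul_assoc[of x i a j f "l - n + 1"] V by (simp add: idx)
  moreover have "mul (i + j - n + 1) l (mul i (j - n + 1) x b) e = mul i (j + l - n + 1) x (mul (j - n + 1) l b e)"
    using mul_assoc[of x i b "j - n + 1" e l] V by (simp add: idx)
  moreover have "mul (i + j - n + 1) l (mul (i - n + 1) j y a) e = mul (i - n + 1) (j + l) y (mul j l a e)"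
    using mul_assoc[of y "i - n + 1" a j e l] V by (simp add: idx)
  moreover have "mul (i + j - n + 1) l (add (i + j - n + 1) (mul i (j - n + 1) x b)
      (gsign (neg (i + j - n + 1)) (j * (n + 1)) (mul (i - n + 1) j y a))) e
    = add (i + j + l - n + 1) (mul (i + j - n + 1) l (mul i (j - n + 1) x b) e)
      (gsign (neg (i + j + l - n + 1)) (j * (n + 1)) (mul (i + j - n + 1) l (mul (i - n + 1) j y a) e))"
    using V by (simp add: mul_add_left mul_gsign_left idx)
  moreover have "mul i (j + l - n + 1) x (add (j + l - n + 1) (mul j (l - n + 1) a f)
      (gsign (neg (j + l - n + 1)) (l * (n + 1)) (mul (j - n + 1) l b e)))
    = add (i + j + l - n + 1) (mul i (j + l - n + 1) x (mul j (l - n + 1) a f))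
      (gsign (neg (i + j + l - n + 1)) (l * (n + 1)) (mul i (j + l - n + 1) x (mul (j - n + 1) l b e)))"
    using V by (simp add: mul_add_right mul_gsign_right idx)
  ultimately show ?thesis
    using V by (simp add: pqr triv_mul_def mul_assoc idx deg.gsign_add deg.gsign_gsign deg.add_assoc)
qed

lemma triv_dif_closed:
  assumes "p \<in> triv_car i"
  shows "triv_dif i p \<in> triv_car (i + 1)"
proof -
  obtain x y where p: "p = (x, y)"
    and x: "x \<in> commutant (n * i) i" and y: "y \<in> commutant (n * (i - n + 2)) (i - n + 1)"
    using assms by (cases p) (simp add: mem_triv_car)
  have "even (n * (i - n + 2) - n * (i + 1))"
    using even_mult_pred[of n] by (simp add: algebra_simps)
  moreover have "mul (i - n + 1) n y s \<in> commutant (n * (i - n + 2)) (i + 1)"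
    using mul_commutant[OF y cycle_commutant] by simp
  ultimately have "mul (i - n + 1) n y s \<in> commutant (n * (i + 1)) (i + 1)"
    by (simp only: commutant_cong)
  moreover have "dif i x \<in> commutant (n * (i + 1)) (i + 1)"
    using dif_commutant[OF x] by (simp add: algebra_simps)
  moreover have "dif (i - n + 1) y \<in> commutant (n * (i + 1 - n + 2)) (i + 1 - n + 1)"
    using dif_commutant[OF y] by (simp add: algebra_simps)
  ultimately show ?thesis
    by (simp add: p triv_dif_def mem_triv_car add_commutant gsign_commutant)
qed

lemma triv_dif_add:
  assumes "p \<in> triv_car i" "p' \<in> triv_car i"
  shows "triv_dif i (triv_add i p p') = triv_add (i + 1) (triv_dif i p) (triv_dif i p')"
proof -
  obtain x y x' y' where pp: "p = (x, y)" "p' = (x', y')"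
    and V: "x \<in> V i" "y \<in> V (i - n + 1)" "x' \<in> V i" "y' \<in> V (i - n + 1)"
    using assms by (elim triv_carE) auto
  have idx: "i - n + 1 + n = i + 1" "i - n + 1 + 1 = i + 1 - n + 1"
    by simp_all
  have "mul (i - n + 1) n (add (i - n + 1) y y') s = add (i + 1) (mul (i - n + 1) n y s) (mul (i - n + 1) n y' s)"
    using mul_add_left[of y "i - n + 1" y' s n] V by (simp add: idx)
  then show ?thesis
    using V by (simp add: pp triv_dif_def triv_add_def dif_add idx deg.gsign_add deg.add_ac)
qed

lemma triv_dif_smult:
  assumes "p \<in> triv_car i"
  shows "triv_dif i (triv_smult i c p) = triv_smult (i + 1) c (triv_dif i p)"
proof -
  obtain x y where p: "p = (x, y)" and V: "x \<in> V i" "y \<in> V (i - n + 1)"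
    using assms by (elim triv_carE) auto
  have idx: "i - n + 1 + n = i + 1" "i - n + 1 + 1 = i + 1 - n + 1"
    by simp_all
  have "mul (i - n + 1) n (sm (i - n + 1) c y) s = sm (i + 1) c (mul (i - n + 1) n y s)"
    using mul_smult_left[of y "i - n + 1" s n c] V by (simp add: idx)
  then show ?thesis
    using V by (simp add: p triv_dif_def triv_smult_def dif_smult idx smult_gsign smult_add)
qed

lemma triv_dif_dif:
  assumes "p \<in> triv_car i"
  shows "triv_dif (i + 1) (triv_dif i p) = triv_zero (i + 2)"
proof -
  obtain x y where p: "p = (x, y)" and V: "x \<in> V i" "y \<in> V (i - n + 1)"
    using assms by (elim triv_carE) auto
  have idx: "i - n + 1 + n = i + 1" "i - n + 1 + 1 = i + 1 - n + 1" "i + 1 + 1 = i + 2"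
    "i + 1 - n + 1 + 1 = i + 2 - n + 1"
    by simp_all
  define Z where "Z = mul (i + 1 - n + 1) n (dif (i - n + 1) y) s"
  have Z: "Z \<in> V (i + 2)"
    using V by (simp add: Z_def)
  have "dif (i + 1) (mul (i - n + 1) n y s) = Z"
    using dif_mul_cycle_right[of y "i - n + 1"] V by (simp add: Z_def idx)
  then have "dif (i + 1) (add (i + 1) (dif i x) (gsign (neg (i + 1)) (i + 1) (mul (i - n + 1) n y s)))
      = gsign (neg (i + 2)) (i + 1) Z"
    using V Z dif_dif[of x i] by (simp add: dif_add dif_gsign idx)
  moreover have "add (i + 2) (gsign (neg (i + 2)) (i + 1) Z) (gsign (neg (i + 2)) (i + 1 + 1) Z) = z (i + 2)"
    using Z by (simp add: deg.gsign_cancel)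
  ultimately show ?thesis
    using V dif_dif[of y "i - n + 1"] by (simp add: p triv_dif_def triv_zero_def idx Z_def)
qed

lemma gsign_triv_neg: "gsign (triv_neg k) e p = (gsign (neg k) e (fst p), gsign (neg (k - n + 1)) e (snd p))"
  by (simp add: gsign_def triv_neg_def)

lemma triv_dif_mul_fst:
  assumes x: "x \<in> V i" and y: "y \<in> V (i - n + 1)"
    and a: "a \<in> commutant (n * j) j" and b: "b \<in> V (j - n + 1)"
  shows "fst (triv_dif (i + j) (triv_mul i j (x, y) (a, b)))
       = fst (triv_add (i + j + 1) (triv_mul (i + 1) j (triv_dif i (x, y)) (a, b))
               (gsign (triv_neg (i + j + 1)) i (triv_mul i (j + 1) (x, y) (triv_dif j (a, b)))))"
proof -
  have aV: "a \<in> V j"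
    using a by (rule commutant_closed)
  note V = x y aV b
  have idx: "i + (j - n + 1) = i + j - n + 1" "j - n + 1 + n = j + 1" "i - n + 1 + j = i + j - n + 1"
    "i - n + 1 + n = i + 1" "n + j = j + n" "i - n + 1 + (j + n) = i + j + 1" "i + j - n + 1 + n = i + j + 1"
    "i + 1 + j = i + j + 1" "i + (j + 1) = i + j + 1"
    by simp_all
  define A where "A = mul (i + 1) j (dif i x) a"
  define B where "B = mul i (j + 1) x (dif j a)"
  define X where "X = mul i (j + 1) x (mul (j - n + 1) n b s)"
  define Y where "Y = mul (i - n + 1) (j + n) y (mul j n a s)"
  have AB: "A \<in> V (i + j + 1)" "B \<in> V (i + j + 1)" "X \<in> V (i + j + 1)" "Y \<in> V (i + j + 1)"
    using V by (simp_all add: A_def B_def X_def Y_def)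
  have xbs: "mul (i + j - n + 1) n (mul i (j - n + 1) x b) s = X"
    using mul_assoc[of x i b "j - n + 1" s n] V by (simp add: X_def idx)
  have yas: "mul (i + j - n + 1) n (mul (i - n + 1) j y a) s = Y"
    using mul_assoc[of y "i - n + 1" a j s n] V by (simp add: Y_def idx)
  have ysa: "mul (i + 1) j (mul (i - n + 1) n y s) a = gsign (neg (i + j + 1)) (n * j) Y"
    using mul_assoc[of y "i - n + 1" s n a j] V
    by (simp add: Y_def idx commutant_eq[OF a] mul_gsign_right)
  have "fst (triv_dif (i + j) (triv_mul i j (x, y) (a, b)))
      = add (i + j + 1) (add (i + j + 1) A (gsign (neg (i + j + 1)) i B))
          (gsign (neg (i + j + 1)) (i + j + 1) (add (i + j + 1) X (gsign (neg (i + j + 1)) (j * (n + 1)) Y)))"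
    using V by (simp add: triv_dif_def triv_mul_def dif_mul mul_add_left mul_gsign_left xbs yas idx A_def B_def)
  also have "\<dots> = add (i + j + 1) (add (i + j + 1) A (gsign (neg (i + j + 1)) (i + 1 + n * j) Y))
          (gsign (neg (i + j + 1)) i (add (i + j + 1) B (gsign (neg (i + j + 1)) (j + 1) X)))"
    by (rule deg.signed_sum_permute[OF AB]) (simp_all add: algebra_simps)
  also have "\<dots> = fst (triv_add (i + j + 1) (triv_mul (i + 1) j (triv_dif i (x, y)) (a, b))
               (gsign (triv_neg (i + j + 1)) i (triv_mul i (j + 1) (x, y) (triv_dif j (a, b)))))"
    using V AB(4) by (simp add: triv_dif_def triv_mul_def triv_add_def gsign_triv_neg mul_add_left
        mul_add_right mul_gsign_left mul_gsign_right ysa idx A_def B_def X_def deg.gsign_gsign)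
  finally show ?thesis .
qed

lemma triv_dif_mul_snd:
  assumes x: "x \<in> V i" and y: "y \<in> V (i - n + 1)"
    and a: "a \<in> V j" and b: "b \<in> commutant (n * (j - n + 2)) (j - n + 1)"
  shows "snd (triv_dif (i + j) (triv_mul i j (x, y) (a, b)))
       = snd (triv_add (i + j + 1) (triv_mul (i + 1) j (triv_dif i (x, y)) (a, b))
               (gsign (triv_neg (i + j + 1)) i (triv_mul i (j + 1) (x, y) (triv_dif j (a, b)))))"
proof -
  have bV: "b \<in> V (j - n + 1)"
    using b by (rule commutant_closed)
  note V = x y a bV
  let ?L = "i + j - n + 1 + 1"
  have idx: "i + (j - n + 1) = i + j - n + 1" "i - n + 1 + j = i + j - n + 1"
    "i + j + 1 - n + 1 = ?L" "i + 1 + j - n + 1 = ?L" "i + 1 - n + 1 = i - n + 1 + 1"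
    "i + 1 + (j - n + 1) = ?L" "i - n + 1 + n = i + 1" "n + (j - n + 1) = j + 1" "j - n + 1 + n = j + 1"
    "i - n + 1 + (j + 1) = ?L" "i + (j + 1) - n + 1 = ?L" "j + 1 - n + 1 = j - n + 1 + 1"
    by simp_all
  define U1 where "U1 = mul (i + 1) (j - n + 1) (dif i x) b"
  define U2 where "U2 = mul i (j - n + 1 + 1) x (dif (j - n + 1) b)"
  define U3 where "U3 = mul (i - n + 1 + 1) j (dif (i - n + 1) y) a"
  define U4 where "U4 = mul (i - n + 1) (j + 1) y (dif j a)"
  define W where "W = mul (i - n + 1) (j + 1) y (mul (j - n + 1) n b s)"
  have U: "U1 \<in> V ?L" "U2 \<in> V ?L" "U3 \<in> V ?L" "U4 \<in> V ?L" "W \<in> V ?L"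
    using V by (simp_all add: U1_def U2_def U3_def U4_def W_def)
  have ysb: "mul (i + 1) (j - n + 1) (mul (i - n + 1) n y s) b = gsign (neg ?L) (n * (j - n + 2)) W"
    using mul_assoc[of y "i - n + 1" s n b "j - n + 1"] V
    by (simp add: W_def idx commutant_eq[OF b] mul_gsign_right)
  have "snd (triv_dif (i + j) (triv_mul i j (x, y) (a, b)))
      = add ?L (add ?L U1 (gsign (neg ?L) i U2))
          (gsign (neg ?L) (j * (n + 1)) (add ?L U3 (gsign (neg ?L) (i - n + 1) U4)))"
    using V dif_mul[of x i b "j - n + 1"] dif_mul[of y "i - n + 1" a j]
    by (simp add: triv_dif_def triv_mul_def dif_add dif_gsign idx U1_def U2_def U3_def U4_def)
  also have "\<dots> = add ?L (add ?L (add ?L U1 (gsign (neg ?L) (i + 1 + n * (j - n + 2)) W))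
          (gsign (neg ?L) (j * (n + 1)) U3))
        (gsign (neg ?L) i (add ?L U2 (gsign (neg ?L) ((j + 1) * (n + 1))
          (add ?L U4 (gsign (neg ?L) (j + 1) W)))))"
  \<comment> \<open>the two terms in W = y b s have opposite signs\<close>
  proof (rule deg.signed_sum_permute_cancel[OF U])
    show "even (j * (n + 1) + (i - n + 1) - (i + (j + 1) * (n + 1)))"
      by (simp add: algebra_simps)
    have "i + 1 + n * (j - n + 2) - (i + (j + 1) * (n + 1) + (j + 1)) = - (n * (n - 1)) - 2 * j - 1"
      by (simp add: algebra_simps)
    then show "odd (i + 1 + n * (j - n + 2) - (i + (j + 1) * (n + 1) + (j + 1)))"
      by (simp only:) (simp add: even_mult_pred[of n])
  qed
  also have "\<dots> = snd (triv_add (i + j + 1) (triv_mul (i + 1) j (triv_dif i (x, y)) (a, b))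
               (gsign (triv_neg (i + j + 1)) i (triv_mul i (j + 1) (x, y) (triv_dif j (a, b)))))"
    using V U(5) by (simp add: triv_dif_def triv_mul_def triv_add_def gsign_triv_neg mul_add_left
        mul_add_right mul_gsign_left mul_gsign_right ysb idx U1_def U2_def U3_def U4_def W_def
        deg.gsign_gsign)
  finally show ?thesis .
qed

lemma triv_dif_mul:
  assumes "p \<in> triv_car i" "q \<in> triv_car j"
  shows "triv_dif (i + j) (triv_mul i j p q)
       = triv_add (i + j + 1) (triv_mul (i + 1) j (triv_dif i p) q)
           (gsign (triv_neg (i + j + 1)) i (triv_mul i (j + 1) p (triv_dif j q)))"
proof -
  obtain x y a b where pq: "p = (x, y)" "q = (a, b)"
    and x: "x \<in> V i" and y: "y \<in> V (i - n + 1)"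
    and a: "a \<in> commutant (n * j) j" and b: "b \<in> commutant (n * (j - n + 2)) (j - n + 1)"
    using assms by (cases p, cases q) (auto simp: mem_triv_car dest: commutant_closed)
  show ?thesis
    using triv_dif_mul_fst[OF x y a commutant_closed[OF b]] triv_dif_mul_snd[OF x y commutant_closed[OF a] b]
    by (simp add: pq prod_eq_iff)
qed

theorem dg_algebra_trivial_extension:
  "dg_algebra triv_car triv_add triv_zero triv_neg triv_smult triv_mul triv_one triv_dif"
  unfolding dg_algebra_iff_dga
  by unfold_locales
    (simp_all add: triv_kvs triv_mul_closed triv_mul_add_left triv_mul_add_right triv_mul_smult_left
      triv_mul_smult_right triv_mul_assoc triv_one_closed triv_mul_one_left triv_mul_one_right
      triv_dif_closed triv_dif_add triv_dif_smult triv_dif_dif triv_dif_mul)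

end

lemma right_module_abgroup_on: "right_module M \<Longrightarrow> abgroup_on (mcar M) (madd M) (mzero M) (mneg M)"
  unfolding right_module_def abgroup_on_def by auto

lemma right_module_zero_mod: "right_module (zero_mod Q)"
  unfolding right_module_def zero_mod_def by simp

context
  fixes M :: "('m, 'g::ring_1) rmod"
  assumes M: "right_module M"
begin

interpretation M: abgroup_on "mcar M" "madd M" "mzero M" "mneg M"
  by (rule right_module_abgroup_on[OF M])

lemma mact_closed [simp]: "x \<in> mcar M \<Longrightarrow> mact M x a \<in> mcar M"
  using M unfolding right_module_def by blast

lemma mact_madd: "x \<in> mcar M \<Longrightarrow> y \<in> mcar M \<Longrightarrow> mact M (madd M x y) a = madd M (mact M x a) (mact M y a)"
  using M unfolding right_module_def by blast

lemma mact_mult: "x \<in> mcar M \<Longrightarrow> mact M x (a * b) = mact M (mact M x a) b"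
  using M unfolding right_module_def by blast

lemma mact_one: "x \<in> mcar M \<Longrightarrow> mact M x 1 = x"
  using M unfolding right_module_def by blast

lemma mact_plus: "x \<in> mcar M \<Longrightarrow> mact M x (a + b) = madd M (mact M x a) (mact M x b)"
  using M unfolding right_module_def by blast

lemma mact_mzero: "mact M (mzero M) a = mzero M"
  by (rule M.zero_unique) (simp_all flip: mact_madd)

lemma gsign_mzero [simp]: "gsign (mneg M) e (mzero M) = mzero M"
  by simp

lemma mact_gsign: "x \<in> mcar M \<Longrightarrow> mact M (gsign (mneg M) e x) a = gsign (mneg M) e (mact M x a)"
proof -
  assume x: "x \<in> mcar M"
  have "madd M (mact M x a) (mact M (mneg M x) a) = mzero M"
    using x by (simp add: mact_mzero flip: mact_madd)
  then show ?thesis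
    using x by (simp add: gsign_def M.neg_unique)
qed

end

context
  fixes M :: "('m, 'g::ring_1) rmod" and N :: "('n, 'g) rmod" and f
  assumes M: "right_module M" and N: "right_module N" and f: "module_hom M N f"
begin

interpretation M: abgroup_on "mcar M" "madd M" "mzero M" "mneg M"
  by (rule right_module_abgroup_on[OF M])

interpretation N: abgroup_on "mcar N" "madd N" "mzero N" "mneg N"
  by (rule right_module_abgroup_on[OF N])

lemma module_hom_closed: "x \<in> mcar M \<Longrightarrow> f x \<in> mcar N"
  using f unfolding module_hom_def by blast

lemma module_hom_madd: "x \<in> mcar M \<Longrightarrow> y \<in> mcar M \<Longrightarrow> f (madd M x y) = madd N (f x) (f y)"
  using f unfolding module_hom_def by blast

lemma module_hom_mact: "x \<in> mcar M \<Longrightarrow> f (mact M x a) = mact N (f x) a"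
  using f unfolding module_hom_def by blast

lemma module_hom_mzero: "f (mzero M) = mzero N"
  by (rule N.zero_unique) (simp_all add: module_hom_closed flip: module_hom_madd)

lemma module_hom_gsign: "x \<in> mcar M \<Longrightarrow> f (gsign (mneg M) e x) = gsign (mneg N) e (f x)"
proof -
  assume x: "x \<in> mcar M"
  have "madd N (f x) (f (mneg M x)) = mzero N"
    using x by (simp add: module_hom_mzero flip: module_hom_madd)
  then show ?thesis
    using x by (simp add: gsign_def N.neg_unique module_hom_closed)
qed

end

lemma module_hom_comp: "module_hom A B f \<Longrightarrow> module_hom B C g \<Longrightarrow> module_hom A C (\<lambda>x. g (f x))"
  unfolding module_hom_def by auto

lemma module_hom_restr: "right_module A \<Longrightarrow> module_hom A B (restr (mcar A) h) \<longleftrightarrow> module_hom A B h"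
  unfolding module_hom_def right_module_def by (auto simp: restr_def)

lemma module_hom_gsign_self: "right_module Q \<Longrightarrow> module_hom Q Q (gsign (mneg Q) e)"
  unfolding module_hom_def
  by (auto simp: abgroup_on.gsign_add[OF right_module_abgroup_on] mact_gsign
      abgroup_on.gsign_closed[OF right_module_abgroup_on])

lemma restr_apply [simp]: "x \<in> A \<Longrightarrow> restr A f x = f x"
  by (simp add: restr_def)

lemma sgn_app_eq_gsign: "sgn_app Q = gsign (mneg Q)"
  by (simp add: fun_eq_iff sgn_app_def gsign_def)

lemma esign_eq_gsign: "esign n P i = gsign (eneg n P i)"
  by (simp add: fun_eq_iff esign_def gsign_def)

section \<open>The endomorphism algebra of the graded module cpx n P\<close>

locale cpx_End =
  fixes \<iota> :: "'k::field \<Rightarrow> 'g::ring_1" and n :: nat and P :: "nat \<Rightarrow> ('m, 'g) rmod"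
  assumes k_algebra: "k_algebra \<iota>" and right_module_cpx [simp]: "right_module (cpx n P j)"
begin

abbreviation C :: "int \<Rightarrow> ('m, 'g) rmod" where "C \<equiv> cpx n P"
abbreviation E :: "int \<Rightarrow> (int \<Rightarrow> 'm \<Rightarrow> 'm) set" where "E \<equiv> Ehom n P"

sublocale cpx: abgroup_on "mcar (C j)" "madd (C j)" "mzero (C j)" "mneg (C j)" for j
  by (rule right_module_abgroup_on) simp

lemma ecomp_apply [simp]: "x \<in> mcar (C j) \<Longrightarrow> ecomp n P i f g j x = f (j + i) (g j x)"
  by (simp add: ecomp_def)

lemma eadd_apply [simp]: "x \<in> mcar (C j) \<Longrightarrow> eadd n P i f g j x = madd (C (j + i)) (f j x) (g j x)"
  by (simp add: eadd_def)

lemma eneg_apply [simp]: "x \<in> mcar (C j) \<Longrightarrow> eneg n P i f j x = mneg (C (j + i)) (f j x)"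
  by (simp add: eneg_def)

lemma ezero_apply [simp]: "x \<in> mcar (C j) \<Longrightarrow> ezero n P i j x = mzero (C (j + i))"
  by (simp add: ezero_def)

lemma esmult_apply [simp]: "x \<in> mcar (C j) \<Longrightarrow> esmult n P \<iota> i c f j x = mact (C (j + i)) (f j x) (\<iota> c)"
  by (simp add: esmult_def)

lemma identE_apply [simp]: "x \<in> mcar (C j) \<Longrightarrow> identE n P j x = x"
  by (simp add: identE_def)

lemma esign_apply: "x \<in> mcar (C j) \<Longrightarrow> esign n P i e f j x = gsign (mneg (C (j + i))) e (f j x)"
  by (simp add: esign_def gsign_def)

lemma Ehom_hom: "f \<in> E i \<Longrightarrow> module_hom (C j) (C (j + i)) (f j)"
  by (simp add: Ehom_def)

lemma Ehom_closed [simp]: "f \<in> E i \<Longrightarrow> x \<in> mcar (C j) \<Longrightarrow> f j x \<in> mcar (C (j + i))"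
  by (rule module_hom_closed[OF right_module_cpx right_module_cpx Ehom_hom])

lemma Ehom_eqI:
  assumes "f \<in> E i" "g \<in> E i" "\<And>j x. x \<in> mcar (C j) \<Longrightarrow> f j x = g j x"
  shows "f = g"
proof (intro ext)
  fix j x
  show "f j x = g j x"
    using assms by (cases "x \<in> mcar (C j)") (simp_all add: Ehom_def)
qed

lemma restr_Ehom:
  assumes "\<And>j. module_hom (C j) (C (j + i)) (h j)"
  shows "(\<lambda>j. restr (mcar (C j)) (h j)) \<in> E i"
  using assms by (simp add: Ehom_def module_hom_restr) (simp add: restr_def)

lemma ecomp_Ehom [simp]:
  assumes "f \<in> E i" "g \<in> E i'" "i + i' = k"
  shows "ecomp n P i' f g \<in> E k"
  unfolding ecomp_def
proof (rule restr_Ehom)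
  fix j
  have "module_hom (C j) (C (j + i' + i)) (\<lambda>x. f (j + i') (g j x))"
    by (rule module_hom_comp[OF Ehom_hom[OF assms(2)] Ehom_hom[OF assms(1)]])
  moreover have "j + i' + i = j + k"
    using assms(3) by simp
  ultimately show "module_hom (C j) (C (j + k)) (\<lambda>x. f (j + i') (g j x))"
    by simp
qed

lemma eadd_Ehom [simp]: "f \<in> E i \<Longrightarrow> g \<in> E i \<Longrightarrow> eadd n P i f g \<in> E i"
  unfolding eadd_def
  by (rule restr_Ehom)
    (auto simp: module_hom_def module_hom_madd[OF _ _ Ehom_hom] module_hom_mact[OF _ _ Ehom_hom]
      mact_madd cpx.add_ac)

lemma eneg_Ehom [simp]: "f \<in> E i \<Longrightarrow> eneg n P i f \<in> E i"
  unfolding eneg_def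
  by (rule restr_Ehom)
    (auto simp: module_hom_def module_hom_madd[OF _ _ Ehom_hom] module_hom_mact[OF _ _ Ehom_hom]
      cpx.neg_add_distrib mact_gsign[where e = 1, simplified])

lemma ezero_Ehom [simp]: "ezero n P i \<in> E i"
  unfolding ezero_def by (rule restr_Ehom) (simp add: module_hom_def mact_mzero)

lemma esmult_Ehom [simp]:
  assumes "f \<in> E i"
  shows "esmult n P \<iota> i c f \<in> E i"
proof -
  have "\<iota> c * a = a * \<iota> c" for a
    using k_algebra unfolding k_algebra_def by metis
  then show ?thesis
    using assms unfolding esmult_def
    by (intro restr_Ehom)
      (auto simp: module_hom_def module_hom_madd[OF _ _ Ehom_hom] module_hom_mact[OF _ _ Ehom_hom]
        mact_madd simp flip: mact_mult)
qed

lemma identE_Ehom: "identE n P \<in> E 0"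
  unfolding identE_def by (rule restr_Ehom) (simp add: module_hom_def)

lemma Ehom_kvs: "kvs (E i) (eadd n P i) (ezero n P i) (eneg n P i) (esmult n P \<iota> i)"
proof -
  have \<iota>: "\<iota> 1 = 1" "\<iota> (c + c') = \<iota> c + \<iota> c'" "\<iota> (c * c') = \<iota> c' * \<iota> c" for c c'
    using k_algebra unfolding k_algebra_def by metis+
  show ?thesis
    unfolding kvs_def
    by (intro conjI ballI allI; (simp; fail)?; rule Ehom_eqI[where i = i])
      (simp_all add: \<iota> cpx.add_ac mact_madd mact_plus mact_one mact_mult)
qed

theorem graded_algebra_End:
  "graded_algebra E (eadd n P) (ezero n P) (eneg n P) (esmult n P \<iota>) (\<lambda>i j f g. ecomp n P j f g) (identE n P)"
proof unfold_locales
  fix i j l :: int and f f' g g' h :: "int \<Rightarrow> 'm \<Rightarrow> 'm" and c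
  assume f: "f \<in> E i" and f': "f' \<in> E i" and g: "g \<in> E j" and g': "g' \<in> E j" and h: "h \<in> E l"
  show "ecomp n P j (eadd n P i f f') g = eadd n P (i + j) (ecomp n P j f g) (ecomp n P j f' g)"
    using f f' g
    by (intro Ehom_eqI[where i = "i + j"] ecomp_Ehom[OF eadd_Ehom[OF f f'] g]) (simp_all add: ac_simps)
  show "ecomp n P j f (eadd n P j g g') = eadd n P (i + j) (ecomp n P j f g) (ecomp n P j f g')"
    using f g g'
    by (intro Ehom_eqI[where i = "i + j"]) (simp_all add: ac_simps module_hom_madd[OF _ _ Ehom_hom])
  show "ecomp n P j (esmult n P \<iota> i c f) g = esmult n P \<iota> (i + j) c (ecomp n P j f g)"
    using f g
    by (intro Ehom_eqI[where i = "i + j"] ecomp_Ehom[OF esmult_Ehom[OF f] g]) (simp_all add: ac_simps)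
  show "ecomp n P j f (esmult n P \<iota> j c g) = esmult n P \<iota> (i + j) c (ecomp n P j f g)"
    using f g
    by (intro Ehom_eqI[where i = "i + j"]) (simp_all add: ac_simps module_hom_mact[OF _ _ Ehom_hom])
  show "ecomp n P l (ecomp n P j f g) h = ecomp n P (j + l) f (ecomp n P l g h)"
    using f g h
    by (intro Ehom_eqI[where i = "i + j + l"] ecomp_Ehom[OF ecomp_Ehom[OF f g refl] h])
      (simp_all add: ac_simps)
  show "ecomp n P i (identE n P) f = f" "ecomp n P 0 f (identE n P) = f"
    using f identE_Ehom by (auto intro: Ehom_eqI[where i = i])
  show "ecomp n P j f g \<in> E (i + j)"
    using f g by simp
qed (simp_all add: Ehom_kvs identE_Ehom)

sublocale End: graded_algebra E "eadd n P" "ezero n P" "eneg n P" "esmult n P \<iota>" "\<lambda>i j f g. ecomp n P j f g"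
  "identE n P"
  by (rule graded_algebra_End)

end

section \<open>The periodic resolution and the cycle sigma\<close>

lemma right_module_cpxI:
  assumes "1 \<le> n" "\<And>i. i < n \<Longrightarrow> right_module (P i)"
  shows "right_module (cpx n P j)"
  using assms by (simp add: cpx_def right_module_zero_mod)

locale resolution = cpx_End \<iota> n P
  for \<iota> :: "'k::field \<Rightarrow> 'g::ring_1" and n :: nat and P :: "nat \<Rightarrow> ('m, 'g) rmod" +
  fixes d :: "nat \<Rightarrow> 'm \<Rightarrow> 'm" and M :: "('m, 'g) rmod" and \<alpha> \<beta> :: "'m \<Rightarrow> 'm"
  assumes n_pos: "1 \<le> n"
    and right_module_M: "right_module M"
    and right_module_P: "i < n \<Longrightarrow> right_module (P i)"
    and d_hom: "1 \<le> i \<Longrightarrow> i < n \<Longrightarrow> module_hom (P i) (P (i - 1)) (d i)"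
    and \<alpha>_hom: "module_hom (P 0) M \<alpha>"
    and \<beta>_hom: "module_hom M (P (n - 1)) \<beta>"
    and exact: "exact_seq n P d M \<alpha> \<beta>"
begin

abbreviation D :: "int \<Rightarrow> 'm \<Rightarrow> 'm" where "D \<equiv> dPe n P d \<alpha> \<beta>"
abbreviation \<sigma> :: "int \<Rightarrow> 'm \<Rightarrow> 'm" where "\<sigma> \<equiv> sigmaE n P"

lemma cpx_neg: "C (- int N) = P (N mod n)"
  by (simp add: cpx_def)

lemma dP_nonneg: "0 \<le> j \<Longrightarrow> dP n P d \<alpha> \<beta> j x = mzero (C (j + 1))"
  by (simp add: dP_def)

lemma exact_comp_zero:
  assumes "i < n" "y \<in> mcar (if i = n - 1 then M else P (i + 1))"
  shows "(if i = 0 then \<alpha> else d i) ((if i = n - 1 then \<beta> else d (i + 1)) y)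
       = mzero (if i = 0 then M else P (i - 1))"
  using exact assms unfolding exact_seq_def by blast

lemma d_d:
  assumes "1 \<le> i" "i + 1 < n" "x \<in> mcar (P (i + 1))"
  shows "d i (d (i + 1) x) = mzero (P (i - 1))"
proof -
  have "i \<noteq> 0" "i \<noteq> n - 1"
    using assms by auto
  then show ?thesis
    using exact_comp_zero[of i x] assms by simp
qed

lemma \<alpha>_d: "2 \<le> n \<Longrightarrow> x \<in> mcar (P 1) \<Longrightarrow> \<alpha> (d 1 x) = mzero M"
  using exact_comp_zero[of 0 x] by simp

lemma d_\<beta>: "2 \<le> n \<Longrightarrow> y \<in> mcar M \<Longrightarrow> d (n - 1) (\<beta> y) = mzero (P (n - 2))"
  using exact_comp_zero[of "n - 1" y] by (simp add: numeral_2_eq_2 diff_diff_add)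

lemma \<alpha>_\<beta>: "n = 1 \<Longrightarrow> y \<in> mcar M \<Longrightarrow> \<alpha> (\<beta> y) = mzero M"
  using exact_comp_zero[of 0 y] by simp

(* The paper's d_0 = beta o alpha: the resolution repeats P_(n-1) -> ... -> P_0 -> P_(n-1) with
   period n. *)

definition d_cyc :: "nat \<Rightarrow> 'm \<Rightarrow> 'm" where
  "d_cyc i = (if i = 0 then (\<lambda>x. \<beta> (\<alpha> x)) else d i)"

lemma dP_neg:
  "dP n P d \<alpha> \<beta> (- int (Suc N)) x = gsign (mneg (P (N mod n))) (int (n * (N div n))) (d_cyc (Suc N mod n) x)"
proof -
  have N: "nat (- (- int (Suc N))) = Suc N" "- int (Suc N) \<le> -1"
    by simp_all
  show ?thesis
  proof (cases "Suc (N mod n) = n")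
    case True
    then have "N mod n = n - 1"
      by simp
    with True N show ?thesis
      by (simp add: dP_def mod_Suc div_Suc sgn_app_eq_gsign d_cyc_def mult.commute del: of_nat_Suc)
  next
    case False
    with N show ?thesis
      by (simp add: dP_def mod_Suc div_Suc sgn_app_eq_gsign d_cyc_def mult.commute del: of_nat_Suc)
  qed
qed

lemma d_cyc_hom: "module_hom (P (Suc N mod n)) (P (N mod n)) (d_cyc (Suc N mod n))"
proof (cases "Suc (N mod n) = n")
  case True
  then have "Suc N mod n = 0" "N mod n = n - 1"
    by (simp_all add: mod_Suc)
  then show ?thesis
    using module_hom_comp[OF \<alpha>_hom \<beta>_hom] by (simp add: d_cyc_def)
next
  case False
  moreover have "N mod n < n"
    using n_pos by simp
  ultimately have "Suc N mod n = Suc (N mod n)" "Suc (N mod n) < n"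
    by (simp_all add: mod_Suc)
  then show ?thesis
    using d_hom[of "Suc (N mod n)"] by (simp add: d_cyc_def)
qed

lemma d_cyc_square:
  assumes x: "x \<in> mcar (P (Suc (Suc N) mod n))"
  shows "d_cyc (Suc N mod n) (d_cyc (Suc (Suc N) mod n) x) = mzero (P (N mod n))"
proof -
  have \<beta>_zero: "\<beta> (mzero M) = mzero (P (n - 1))"
    using n_pos by (simp add: module_hom_mzero[OF right_module_M right_module_P \<beta>_hom])
  have "N mod n < n"
    using n_pos by simp
  then consider (inner) "Suc (Suc (N mod n)) < n" | (top) "Suc (Suc (N mod n)) = n" | (wrap) "Suc (N mod n) = n"
    by linarith
  then show ?thesis
  proof cases
    case inner
    then have "Suc N mod n = Suc (N mod n)" "Suc (Suc N) mod n = Suc (Suc (N mod n))"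
      by (simp_all add: mod_Suc)
    then show ?thesis
      using d_d[of "Suc (N mod n)" x] x inner by (simp add: d_cyc_def)
  next
    case top
    then have "Suc N mod n = n - 1" "Suc (Suc N) mod n = 0" "N mod n = n - 2"
      by (simp_all add: mod_Suc)
    then show ?thesis
      using d_\<beta>[of "\<alpha> x"] x top module_hom_closed[OF right_module_P right_module_M \<alpha>_hom]
      by (simp add: d_cyc_def)
  next
    case wrap
    then have mods: "Suc N mod n = 0" "N mod n = n - 1"
      by (simp_all add: mod_Suc)
    show ?thesis
    proof (cases "n = 1")
      case True
      then show ?thesis
        using mods \<beta>_zero \<alpha>_\<beta>[of "\<alpha> x"] x module_hom_closed[OF right_module_P right_module_M \<alpha>_hom]
        by (simp add: d_cyc_def)
    next
      case False
      then have "Suc (Suc N) mod n = 1"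
        using wrap by (simp add: mod_Suc)
      then show ?thesis
        using mods False n_pos \<beta>_zero \<alpha>_d[of x] x by (simp add: d_cyc_def)
    qed
  qed
qed

lemma dP_hom: "module_hom (C j) (C (j + 1)) (dP n P d \<alpha> \<beta> j)"
proof (cases "0 \<le> j")
  case True
  then show ?thesis
    by (simp add: module_hom_def dP_nonneg mact_mzero)
next
  case False
  then have "j < 0"
    by simp
  then obtain N where j: "j = - int (Suc N)"
    using negD by blast
  then have "j + 1 = - int N"
    by simp
  then have "C (j + 1) = P (N mod n)"
    by (simp only: cpx_neg)
  moreover have "C j = P (Suc N mod n)"
    using j by (simp only: cpx_neg)
  moreover have "dP n P d \<alpha> \<beta> j = (\<lambda>x. gsign (mneg (P (N mod n))) (int (n * (N div n))) (d_cyc (Suc N mod n) x))"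
    using j by (intro ext) (simp only: dP_neg)
  ultimately show ?thesis
    using n_pos module_hom_comp[OF d_cyc_hom module_hom_gsign_self[OF right_module_P]] by simp
qed

lemma dPe_Ehom: "D \<in> E 1"
  unfolding dPe_def by (rule restr_Ehom) (rule dP_hom)

lemma dPe_apply: "x \<in> mcar (C j) \<Longrightarrow> D j x = dP n P d \<alpha> \<beta> j x"
  by (simp add: dPe_def)

lemma dP_square:
  assumes x: "x \<in> mcar (C j)"
  shows "dP n P d \<alpha> \<beta> (j + 1) (dP n P d \<alpha> \<beta> j x) = mzero (C (j + 2))"
proof (cases "0 \<le> j + 1")
  case True
  then show ?thesis
    by (simp add: dP_nonneg add.commute)
next
  case False
  then have "j + 1 < 0"
    by simp
  then obtain N where "j + 1 = - int (Suc N)"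
    using negD by blast
  then have j: "j = - int (Suc (Suc N))" "j + 1 = - int (Suc N)" "j + 2 = - int N"
    by simp_all
  have mods: "Suc N mod n < n" "N mod n < n"
    using n_pos by simp_all
  have "x \<in> mcar (P (Suc (Suc N) mod n))"
    using x by (simp only: j cpx_neg)
  then have "d_cyc (Suc (Suc N) mod n) x \<in> mcar (P (Suc N mod n))"
    using mods by (intro module_hom_closed[OF right_module_P right_module_P d_cyc_hom]) simp_all
  moreover have "dP n P d \<alpha> \<beta> j x
      = gsign (mneg (P (Suc N mod n))) (int (n * (Suc N div n))) (d_cyc (Suc (Suc N) mod n) x)"
    unfolding j(1) by (rule dP_neg)
  ultimately show ?thesis
    using mods \<open>x \<in> mcar (P (Suc (Suc N) mod n))\<close>
    unfolding j(2,3) dP_neg cpx_neg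
    by (simp add: module_hom_gsign[OF right_module_P right_module_P d_cyc_hom] d_cyc_square right_module_P)
qed

lemma dPe_square: "ecomp n P 1 D D = ezero n P 2"
proof (rule Ehom_eqI[where i = 2])
  fix j x
  assume "x \<in> mcar (C j)"
  moreover have "dP n P d \<alpha> \<beta> j x \<in> mcar (C (j + 1))"
    by (rule module_hom_closed[OF right_module_cpx right_module_cpx dP_hom \<open>x \<in> mcar (C j)\<close>])
  ultimately show "ecomp n P 1 D D j x = ezero n P 2 j x"
    by (simp add: dPe_apply dP_square)
qed (simp_all add: ecomp_Ehom[OF dPe_Ehom dPe_Ehom])

lemma cpx_shift: "j \<le> - int n \<Longrightarrow> C (j + int n) = C j"
proof -
  assume "j \<le> - int n"
  then obtain N where "j + int n = - int N" "j = - int (N + n)"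
    by (intro that[of "nat (- j - int n)"]) simp_all
  then show ?thesis
    by (simp only: cpx_neg mod_add_self2)
qed

lemma sigma_Ehom: "\<sigma> \<in> E (int n)"
  unfolding sigmaE_def
proof (rule restr_Ehom)
  fix j
  show "module_hom (C j) (C (j + int n)) (\<lambda>x. if j \<le> - int n then x else mzero (C (j + int n)))"
    by (cases "j \<le> - int n") (simp_all add: cpx_shift module_hom_def mact_mzero)
qed

lemma sigma_apply: "x \<in> mcar (C j) \<Longrightarrow> \<sigma> j x = (if j \<le> - int n then x else mzero (C (j + int n)))"
  by (simp add: sigmaE_def)

lemma dP_shift:
  assumes "j < - int n" and x: "x \<in> mcar (C j)"
  shows "dP n P d \<alpha> \<beta> (j + int n) x = gsign (mneg (C (j + 1))) (int n) (dP n P d \<alpha> \<beta> j x)"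
proof -
  obtain N where j: "j = - int (Suc N)" "j + 1 = - int N" "j + int n = - int (Suc (N - n))" and "n \<le> N"
    using assms by (intro that[of "nat (- j) - 1"]) simp_all
  then have "N div n = Suc ((N - n) div n)" "(N - n) mod n = N mod n" "Suc (N - n) mod n = Suc N mod n"
    using n_pos le_div_geq[of n N] le_mod_geq[of n N] mod_add_self2[of "Suc (N - n)" n] by simp_all
  moreover have "dP n P d \<alpha> \<beta> (j + int n) x
      = gsign (mneg (P ((N - n) mod n))) (int (n * ((N - n) div n))) (d_cyc (Suc (N - n) mod n) x)"
    unfolding j(3) by (rule dP_neg)
  moreover have "dP n P d \<alpha> \<beta> j x = gsign (mneg (P (N mod n))) (int (n * (N div n))) (d_cyc (Suc N mod n) x)"
    unfolding j(1) by (rule dP_neg)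
  moreover have "C (j + 1) = P (N mod n)"
    unfolding j(2) by (rule cpx_neg)
  moreover have "d_cyc (Suc N mod n) x \<in> mcar (P (N mod n))"
    using x n_pos unfolding j(1) cpx_neg
    by (intro module_hom_closed[OF right_module_P right_module_P d_cyc_hom]) simp_all
  ultimately show ?thesis
    using n_pos by (simp add: gsign_def abgroup_on.neg_neg[OF right_module_abgroup_on[OF right_module_P]])
qed

lemma dPe_sigma: "ecomp n P (int n) D \<sigma> = esign n P (int n + 1) (int n) (ecomp n P 1 \<sigma> D)"
proof (rule Ehom_eqI[where i = "int n + 1"])
  fix j x
  assume x: "x \<in> mcar (C j)"
  have Dx: "dP n P d \<alpha> \<beta> j x \<in> mcar (C (j + 1))"
    by (rule module_hom_closed[OF right_module_cpx right_module_cpx dP_hom x])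
  have idx: "j + (int n + 1) = j + 1 + int n"
    by simp
  consider "j < - int n" | "j = - int n" | "- int n < j"
    by linarith
  then show "ecomp n P (int n) D \<sigma> j x = esign n P (int n + 1) (int n) (ecomp n P 1 \<sigma> D) j x"
  proof cases
    case 1
    then show ?thesis
      using x Dx by (simp add: esign_apply sigma_apply dPe_apply cpx_shift idx dP_shift[OF 1 x])
  next
    case 2
    then show ?thesis
      using x Dx cpx_shift[of j] by (simp add: esign_apply sigma_apply dPe_apply dP_nonneg idx)
  next
    case 3
    then show ?thesis
      using x Dx module_hom_mzero[OF right_module_cpx right_module_cpx dP_hom]
      by (simp add: esign_apply sigma_apply dPe_apply idx ac_simps)
  qed
qed (simp_all add: esign_def ecomp_Ehom[OF dPe_Ehom sigma_Ehom] ecomp_Ehom[OF sigma_Ehom dPe_Ehom])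

lemma graded_commutator_sigma: "End.graded_commutator D (int n) \<sigma> = ezero n P (int n + 1)"
  unfolding End.graded_commutator_def dPe_sigma esign_eq_gsign
  by (rule End.deg.gsign_cancel) (simp_all add: ecomp_Ehom[OF sigma_Ehom dPe_Ehom])

lemma edelta_eq_graded_commutator: "edelta n P d \<alpha> \<beta> = End.graded_commutator D"
  by (simp add: fun_eq_iff edelta_def End.graded_commutator_def esign_eq_gsign)

sublocale End_sigma: dga_cycle E "eadd n P" "ezero n P" "eneg n P" "esmult n P \<iota>" "\<lambda>i j f g. ecomp n P j f g"
  "identE n P" "edelta n P d \<alpha> \<beta>" \<sigma> "int n"
  unfolding edelta_eq_graded_commutator
  by (intro dga_cycle.intro End.dga_graded_commutator dPe_Ehom dPe_square dga_cycle_axioms.intro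
      sigma_Ehom graded_commutator_sigma)

lemma T_eq_trivial_extension:
  "Tcar n P = End_sigma.triv_car" "Tadd n P = End_sigma.triv_add" "Tzero n P = End_sigma.triv_zero"
  "Tneg n P = End_sigma.triv_neg" "Tsmult n P \<iota> = End_sigma.triv_smult" "Tmul n P = End_sigma.triv_mul"
  "Tone n P = End_sigma.triv_one" "Tdif n P d \<alpha> \<beta> = End_sigma.triv_dif"
  by (auto simp: fun_eq_iff Tcar_def Tadd_def Tzero_def Tneg_def Tsmult_def Tmul_def Tone_def Tdif_def
      End_sigma.triv_car_def End_sigma.triv_add_def End_sigma.triv_zero_def End_sigma.triv_neg_def
      End_sigma.triv_smult_def End_sigma.triv_mul_def End_sigma.triv_one_def End_sigma.triv_dif_def
      sigE_def msigE_def End_sigma.sig_commutant_def End_sigma.msig_commutant_def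
      End_sigma.commutant_def esign_eq_gsign)

end

theorem proposition2p13:
  fixes \<iota> :: "'k::field \<Rightarrow> 'g::ring_1"
    and n :: nat
    and P :: "nat \<Rightarrow> ('m,'g) rmod"
    and d :: "nat \<Rightarrow> 'm \<Rightarrow> 'm"
    and M :: "('m,'g) rmod"
    and \<alpha> \<beta> :: "'m \<Rightarrow> 'm"
  assumes "k_algebra \<iota>"
    and "n \<ge> 1"
    and "right_module M"
    and "\<forall>i<n. right_module (P i) \<and> fg_projective (P i)"
    and "\<forall>i. 1 \<le> i \<and> i < n \<longrightarrow> module_hom (P i) (P (i - 1)) (d i)"
    and "module_hom (P 0) M \<alpha>"
    and "module_hom M (P (n - 1)) \<beta>"
    and "exact_seq n P d M \<alpha> \<beta>"
  shows "dg_algebra (Tcar n P) (Tadd n P) (Tzero n P) (Tneg n P) (Tsmult n P \<iota>)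
                    (Tmul n P) (Tone n P) (Tdif n P d \<alpha> \<beta>)"
proof -
  interpret resolution \<iota> n P d M \<alpha> \<beta>
    using assms by unfold_locales (auto intro: right_module_cpxI)
  show ?thesis
    unfolding T_eq_trivial_extension by (rule End_sigma.dg_algebra_trivial_extension)
qed

end
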